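(* Let $k\leq n/2$ and let $L\subseteq \{w\in\{0,1\}^n : |w|_1=k\}$ be a nonempty language. Then $\mathrm{rpn}(L) \geq n k^{\Omega(\log k)} \cdot |L|/\binom{n}{k}$.
   Context: $|w|_1$ is the number of ones in $w$. Regular expressions are built from $\epsilon$ and letters by union and concatenation (no $\emptyset$); $\mathrm{rpn}(L)$ is the minimum number of syntax-tree nodes of an expression describing $L$. Logarithms are base 2. *)

theory Defs
  imports Complex_Main
begin

datatype 'a rexp = Eps | Lit 'a | Union "'a rexp" "'a rexp" | Concat "'a rexp" "'a rexp"

fun lang :: "'a rexp \<Rightarrow> 'a list set" where
  "lang Eps = {[]}"
| "lang (Lit a) = {[a]}"
| "lang (Union r s) = lang r \<union> lang s"
| "lang (Concat r s) = {u @ v | u v. u \<in> lang r \<and> v \<in> lang s}"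

fun rsize :: "'a rexp \<Rightarrow> nat" where
  "rsize Eps = 1"
| "rsize (Lit a) = 1"
| "rsize (Union r s) = 1 + rsize r + rsize s"
| "rsize (Concat r s) = 1 + rsize r + rsize s"

definition rpn :: "'a list set \<Rightarrow> nat" where
  "rpn L = (LEAST m. \<exists>r. lang r = L \<and> rsize r = m)"

text \<open>Binary words: True = 1, False = 0. Number of ones.\<close>
definition ones :: "bool list \<Rightarrow> nat" where
  "ones w = length (filter id w)"

end

(*
  Every node of an expression for a subset of a slice (all words with o ones and z zeros)
  denotes a subset of a slice itself.  With G m = exp ((ln m)^2 / 2000) = m^\<Omega>(log m) and the
  potential w(o, z) = (o + z) + m * G m, m = min o z, induction on the expression gives
  |L| * w(o, z) \<le> size * (o + z choose o): unions are subadditive, and for a concatenation of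
  the slices (o1, z1) and (o2, z2) the product (o1 + z1 choose o1) * (o2 + z2 choose o2) is
  only one term of Vandermonde's convolution for (o + z choose o).  Comparing it with the
  neighbouring terms shows that it is a small enough fraction of the whole to pay for the
  growth of w.

  For a slice of words of length n \<ge> 2k with k ones, restrict the expression to a set S of
  2k positions: it then describes the words of L whose ones lie in S, seen as words of the
  balanced slice (k, k), with at most twice as many nodes as it has literals in S.  Averaging
  over all S yields rpn L * (n choose k) \<ge> n * G k * |L| / 4, and G k is the 8th power of
  k powr (c * log 2 k) for c = ln 2 / 16000.
*)

theory Submission
  imports Defs
begin

definition quasipoly :: "real \<Rightarrow> real" where
  "quasipoly x = exp ((ln x)^2 / 2000)"

definition superlin :: "real \<Rightarrow> real" where
  "superlin x = x * quasipoly x"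

lemma quasipoly_ge_1: "1 \<le> quasipoly x"
  by (simp add: quasipoly_def)

lemma superlin_nonneg: "0 \<le> x \<Longrightarrow> 0 \<le> superlin x"
  using quasipoly_ge_1[of x] by (simp add: superlin_def)

lemma le_superlin: "0 \<le> x \<Longrightarrow> x \<le> superlin x"
  using mult_left_mono[OF quasipoly_ge_1[of x], of x] by (simp add: superlin_def)

lemma superlin_ge_decayed:
  fixes t q :: real
  assumes "1 \<le> q" and "q \<le> t"
  shows "t * exp (- (1 + ln t / 1000) * (ln t - ln q)) * quasipoly t \<le> superlin q"
proof -
  have "(ln t)^2 - (ln q)^2 \<le> 2 * ln t * (ln t - ln q)"
    using zero_le_power2[of "ln t - ln q"] by (simp add: power2_eq_square algebra_simps)
  then have "ln t + - (1 + ln t / 1000) * (ln t - ln q) + (ln t)^2 / 2000 \<le> ln q + (ln q)^2 / 2000"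
    by (simp add: field_simps power2_eq_square)
  then have "exp (ln t + - (1 + ln t / 1000) * (ln t - ln q) + (ln t)^2 / 2000)
      \<le> exp (ln q + (ln q)^2 / 2000)"
    by simp
  moreover have "t * exp (- (1 + ln t / 1000) * (ln t - ln q)) * quasipoly t
      = exp (ln t + - (1 + ln t / 1000) * (ln t - ln q) + (ln t)^2 / 2000)"
    using assms by (simp only: exp_add quasipoly_def) simp
  moreover have "exp (ln q + (ln q)^2 / 2000) = superlin q"
    using assms by (simp add: superlin_def quasipoly_def exp_add)
  ultimately show ?thesis by simp
qed

lemma ln_gt_17_if_quasipoly_gt:
  assumes "1 \<le> t" and "19/16 < quasipoly t"
  shows "17 < ln t"
proof -
  have "3/19 \<le> ln (19/16::real)"
    using ln_le_minus_one[of "16/19::real"] by (simp add: ln_div)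
  also have "ln (19/16) < (ln t)^2 / 2000"
    using assms(2) unfolding quasipoly_def by (metis exp_gt_zero ln_exp ln_less_cancel_iff zero_less_divide_iff zero_less_numeral)
  finally have "17^2 < (ln t)^2" by simp
  then show ?thesis
    using assms(1) by (smt (verit) ln_ge_zero power_mono)
qed

lemma superlin_step_small:
  fixes t q \<rho> :: real
  assumes "0 < t" "0 \<le> q" "0 \<le> \<rho>" "quasipoly t \<le> 19/16"
    and "(t \<le> 8*q \<and> \<rho> \<le> 2/3) \<or> \<rho> \<le> 1/2"
  shows "\<rho> * (superlin t + 2*t) \<le> 2*t + superlin q"
proof -
  have "superlin t \<le> 19/16 * t"
    using assms(1,4) by (simp add: superlin_def)
  then have bound: "\<rho> * (superlin t + 2*t) \<le> \<rho> * (51/16 * t)"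
    using assms(3) by (intro mult_left_mono) auto
  consider "t \<le> 8*q" "\<rho> \<le> 2/3" | "\<rho> \<le> 1/2" using assms(5) by blast
  then show ?thesis
  proof cases
    case 1
    then have "\<rho> * (51/16 * t) \<le> 2/3 * (51/16 * t)"
      using assms(1) by (intro mult_right_mono) auto
    then show ?thesis using bound 1 le_superlin[OF assms(2)] by linarith
  next
    case 2
    then have "\<rho> * (51/16 * t) \<le> 1/2 * (51/16 * t)"
      using assms(1) by (intro mult_right_mono) auto
    then show ?thesis using bound assms(1) superlin_nonneg[OF assms(2)] by linarith
  qed
qed

lemma decay_ge_two_thirds:
  fixes t q A :: real
  assumes "1 \<le> q" "q < t" "1 \<le> A" "(t - q) * (4 * A) \<le> t"
  shows "2/3 \<le> exp (- A * (ln t - ln q))"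
proof -
  have "ln t - ln q \<le> t / q - 1"
    using ln_le_minus_one[of "t / q"] assms(1,2) by (simp add: ln_div)
  also have "\<dots> = (t - q) / q" using assms(1) by (simp add: field_simps)
  also have "\<dots> \<le> 1 / (3 * A)"
  proof -
    have "(t - q) * 4 \<le> (t - q) * (4 * A)" using assms by (intro mult_left_mono) auto
    then have "3/4 * t \<le> q" using assms(4) by simp
    then show ?thesis using assms by (simp add: field_simps)
  qed
  finally have "A * (ln t - ln q) \<le> 1/3"
    using assms(3) by (simp add: field_simps)
  then have "exp (-(1/3)) \<le> exp (- A * (ln t - ln q))" by simp
  moreover have "2/3 \<le> exp (-(1/3::real))"
    using exp_ge_add_one_self[of "-(1/3::real)"] by simp
  ultimately show ?thesis by linarith
qed

lemma mult_exp_le_of_ln: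
  fixes t A :: real
  assumes "0 < t" "1 \<le> A" "7 * A + 6 \<le> ln t"
  shows "128 * A * exp (6 * A) \<le> t"
proof -
  have "ln (128 * A) = 7 * ln 2 + ln A" using assms(2) ln_realpow[of 2 7] by (simp add: ln_mult)
  also have "\<dots> \<le> 7 + (A - 1)"
    using ln_le_minus_one[of 2] ln_le_minus_one[of A] assms(2) by simp
  finally have "exp (ln (128 * A) + 6 * A) \<le> exp (ln t)" using assms(3) by simp
  then show ?thesis using assms(1,2) by (simp add: exp_add)
qed

lemma ratio_le_decay:
  fixes t q A \<rho> :: real
  assumes "1 \<le> q" "q < t" "t \<le> 8*q" "1 \<le> A" "7 * A + 6 \<le> ln t" "t < (t - q) * (4 * A)"
    and "0 \<le> \<rho>" "\<rho>^2 * (t - q) \<le> 32/3"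
  shows "\<rho> \<le> exp (- A * (ln t - ln q))"
proof -
  note A1 = assms(4)
  have "\<rho>^2 * t \<le> \<rho>^2 * ((t - q) * (4 * A))"
    using assms(6) by (intro mult_left_mono) auto
  also have "\<dots> \<le> 32/3 * (4 * A)"
    using mult_right_mono[OF assms(8), of "4 * A"] A1 by (simp add: algebra_simps)
  finally have rho_sq: "\<rho>^2 * t \<le> 1/3 * (128 * A)" by simp
  have "128 * A * exp (6 * A) \<le> t"
    using assms(1,2,4,5) by (intro mult_exp_le_of_ln) auto
  then have "\<rho>^2 * (128 * A * exp (6 * A)) \<le> \<rho>^2 * t"
    by (rule mult_left_mono) simp
  then have "(\<rho>^2 * exp (6 * A)) * (128 * A) \<le> 1/3 * (128 * A)"
    using rho_sq by (simp add: algebra_simps)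
  then have "\<rho>^2 * exp (6 * A) \<le> 1/3"
    by (rule mult_right_le_imp_le) (use A1 in simp)
  then have "\<rho>^2 * exp (6 * A) * exp (- (6 * A)) \<le> 1/3 * exp (- (6 * A))"
    by (rule mult_right_mono) simp
  then have "\<rho>^2 \<le> exp (- (6 * A))"
    by (simp add: mult.assoc exp_minus_inverse) (use zero_le_power2[of \<rho>] in linarith)
  also have "\<dots> = (exp (- A * 3))^2"
    using exp_of_nat_mult[of 2 "- A * 3"] by simp
  finally have "\<rho> \<le> exp (- A * 3)"
    by (rule power2_le_imp_le) simp
  also have "\<dots> \<le> exp (- A * (ln t - ln q))"
  proof -
    have "ln t - ln q = ln (t / q)" using assms(1,2) by (simp add: ln_div)
    also have "\<dots> \<le> ln 8"
      using assms(1,2,3) by (intro ln_mono) (auto simp: divide_le_eq)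
    also have "\<dots> \<le> 3" using ln_realpow[of 2 3] ln_le_minus_one[of 2] by simp
    finally show ?thesis using A1 by simp
  qed
  finally show ?thesis .
qed

lemma superlin_step_near:
  fixes t q \<rho> :: real
  assumes "1 \<le> q" "q < t" "t \<le> 8*q" "17 < ln t"
    and "0 \<le> \<rho>" "\<rho> \<le> 2/3" "\<rho>^2 * (t - q) \<le> 32/3"
  shows "\<rho> * (superlin t + 2*t) \<le> 2*t + superlin q"
proof -
  define A where "A = 1 + ln t / 1000"
  define e where "e = exp (- A * (ln t - ln q))"
  have "\<rho> \<le> e"
  proof (cases "(t - q) * (4 * A) \<le> t")
    case True
    then have "2/3 \<le> e"
      unfolding e_def using assms(1,2,4) by (intro decay_ge_two_thirds) (auto simp: A_def)
    then show ?thesis using assms(6) by linarith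
  next
    case False
    then show ?thesis
      unfolding e_def using assms by (intro ratio_le_decay) (auto simp: A_def)
  qed
  then have "\<rho> * (t * quasipoly t) \<le> t * e * quasipoly t"
    using assms(2,1) quasipoly_ge_1[of t] by (simp add: mult_right_mono)
  moreover have "t * e * quasipoly t \<le> superlin q"
    unfolding e_def A_def using assms(1,2) by (intro superlin_ge_decayed) auto
  moreover have "\<rho> * (2 * t) \<le> 2 * t" using assms(1,2,6) by simp
  ultimately show ?thesis by (simp add: superlin_def distrib_left)
qed

lemma superlin_step_far:
  fixes t \<rho> :: real and i :: nat
  assumes "10 \<le> t" "0 \<le> \<rho>" "3*t \<le> 16*i + 11" "\<rho> * 4^i \<le> 1"
  shows "\<rho> * (superlin t + 2*t) \<le> 2*t"
proof -
  have "ln t < 2 * sqrt t"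
    using ln_le_minus_one[of "sqrt t"] assms(1) by (simp add: ln_sqrt)
  then have "(ln t)^2 < (2 * sqrt t)^2"
    using assms(1) by (intro power_strict_mono) auto
  then have "quasipoly t \<le> exp (t / 500)"
    using assms(1) by (simp add: quasipoly_def power_mult_distrib)
  moreover have "exp 1 * exp (t / 500) \<le> 4 ^ i"
  proof -
    have "exp (1 + t / 500) \<le> exp (real i)" using assms(1,3) by simp
    also have "\<dots> = exp 1 ^ i" by (simp flip: exp_of_nat_mult)
    also have "\<dots> \<le> 4 ^ i" using exp_le by (intro power_mono) auto
    finally show ?thesis by (simp add: exp_add)
  qed
  moreover have "3 * exp (t / 500) \<le> 2 * exp 1 * exp (t / 500)"
    using exp_ge_add_one_self[of 1] by (intro mult_right_mono) auto
  ultimately have "quasipoly t + 2 \<le> 2 * 4 ^ i"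
    using quasipoly_ge_1[of t] exp_ge_add_one_self[of "t / 500"] assms(1) by linarith
  then have "\<rho> * (quasipoly t + 2) \<le> \<rho> * (2 * 4 ^ i)"
    using assms(2) by (rule mult_left_mono)
  then have "\<rho> * (quasipoly t + 2) \<le> 2" using assms(4) by simp
  then have "\<rho> * (quasipoly t + 2) * t \<le> 2 * t"
    using assms(1) by (simp add: mult_right_mono)
  then show ?thesis by (simp add: superlin_def algebra_simps)
qed

(* \<rho> stands for the share of the slice of a concatenation taken by the product of the slices
   of its factors (see superlin_step_ratio); the hypotheses on \<rho> are what three_nslice_pair_le,
   nslice_pair_sq_le and unbalanced_pow_mult_le provide. *)
lemma superlin_step:
  fixes t q :: nat and \<rho> :: real
  assumes "q < t" "0 \<le> \<rho>" "\<rho> \<le> 2/3" "\<rho>^2 * (real t - real q) \<le> 32/3"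
    and "t \<le> 8*q \<or> (\<rho> \<le> 1/2 \<and> (\<exists>i::nat. 3*t \<le> 16*i + 11 \<and> \<rho> * 4^i \<le> 1))"
  shows "\<rho> * (superlin t + 2 * real t) \<le> 2 * real t + superlin q"
proof (cases "quasipoly t \<le> 19/16")
  case True
  then show ?thesis
    using assms by (intro superlin_step_small) auto
next
  case False
  then have ln_t: "17 < ln (real t)"
    using assms(1) by (intro ln_gt_17_if_quasipoly_gt) auto
  consider "t \<le> 8*q" | i :: nat where "3*t \<le> 16*i + 11" "\<rho> * 4^i \<le> 1"
    using assms(5) by blast
  then show ?thesis
  proof cases
    case 1
    then show ?thesis
      using assms ln_t by (intro superlin_step_near) auto
  next
    case 2
    have "18 \<le> real t"
      using ln_t exp_ge_add_one_self[of "ln (real t)"] assms(1) by simp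
    then have "\<rho> * (superlin t + 2 * real t) \<le> 2 * real t"
      using 2 assms(2) by (intro superlin_step_far) auto
    then show ?thesis using superlin_nonneg[of q] by simp
  qed
qed

lemma superlin_step_ratio:
  fixes t q :: nat and P C :: real
  assumes "0 < C" "0 \<le> P" "q < t" "3 * P \<le> 2 * C"
    and "P^2 * (real t - real q) \<le> 32/3 * C^2"
    and "t \<le> 8*q \<or> (2 * P \<le> C \<and> (\<exists>i::nat. 3*t \<le> 16*i + 11 \<and> P * 4^i \<le> C))"
  shows "P * superlin t \<le> 2 * (C - P) * real t + C * superlin q"
proof -
  have "P / C * (superlin t + 2 * real t) \<le> 2 * real t + superlin q"
  proof (rule superlin_step)
    have "(P / C)^2 * (real t - real q) * C^2 \<le> 32/3 * C^2"
      using assms(1,5) by (simp add: power_divide)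
    then show "(P / C)^2 * (real t - real q) \<le> 32/3"
      by (rule mult_right_le_imp_le) (use assms(1) in simp)
    show "t \<le> 8*q \<or> (P / C \<le> 1/2 \<and> (\<exists>i::nat. 3*t \<le> 16*i + 11 \<and> P / C * 4^i \<le> 1))"
      using assms(1,6) by (auto simp: field_simps)
  qed (use assms in \<open>auto simp: field_simps\<close>)
  then have "P * (superlin t + 2 * real t) \<le> (2 * real t + superlin q) * C"
    using assms(1) by (simp add: pos_divide_le_eq)
  then show ?thesis by (simp add: algebra_simps)
qed

definition nslice :: "nat \<Rightarrow> nat \<Rightarrow> nat" where
  "nslice x y = (x + y) choose x"

definition nslice_pair :: "nat \<Rightarrow> nat \<Rightarrow> nat \<Rightarrow> nat \<Rightarrow> nat" where
  "nslice_pair o1 z1 o2 z2 = nslice o1 z1 * nslice o2 z2"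

lemma nslice_pos: "0 < nslice x y"
  by (simp add: nslice_def)

lemma nslice_commute: "nslice x y = nslice y x"
  unfolding nslice_def by (metis add.commute binomial_symmetric le_add1 add_diff_cancel_left')

lemma nslice_Suc_mult: "nslice (Suc x) y * Suc x = nslice x (Suc y) * Suc y"
proof -
  have "Suc x * (Suc (x + y) choose Suc x) = Suc (x + y) * ((x + y) choose x)"
    by (rule Suc_times_binomial)
  moreover have "Suc y * (Suc (x + y) choose x) = Suc (x + y) * ((x + y) choose x)"
    using binomial_absorb_comp[of "Suc (x + y)" x] by simp
  ultimately show ?thesis by (simp add: nslice_def mult.commute)
qed

lemma nslice_pair_pos: "0 < nslice_pair o1 z1 o2 z2"
  by (simp add: nslice_pair_def nslice_pos)

lemma nslice_pair_swap: "nslice_pair o1 z1 o2 z2 = nslice_pair o2 z2 o1 z1"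
  by (simp add: nslice_pair_def)

lemma nslice_pair_commute: "nslice_pair o1 z1 o2 z2 = nslice_pair z1 o1 z2 o2"
  by (simp add: nslice_pair_def nslice_commute)

lemma nslice_pair_up_Suc:
  assumes "i < z1" "i < o2"
  shows "nslice_pair (o1 + Suc i) (z1 - Suc i) (o2 - Suc i) (z2 + Suc i) * ((o1 + Suc i) * (z2 + Suc i))
       = nslice_pair (o1 + i) (z1 - i) (o2 - i) (z2 + i) * ((z1 - i) * (o2 - i))"
proof -
  have a: "nslice (o1 + Suc i) (z1 - Suc i) * (o1 + Suc i) = nslice (o1 + i) (z1 - i) * (z1 - i)"
    using nslice_Suc_mult[of "o1 + i" "z1 - Suc i"] assms by (simp add: Suc_diff_Suc)
  have b: "nslice (o2 - Suc i) (z2 + Suc i) * (z2 + Suc i) = nslice (o2 - i) (z2 + i) * (o2 - i)"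
    using nslice_Suc_mult[of "o2 - Suc i" "z2 + i"] assms by (simp add: Suc_diff_Suc)
  have "nslice_pair (o1 + Suc i) (z1 - Suc i) (o2 - Suc i) (z2 + Suc i) * ((o1 + Suc i) * (z2 + Suc i))
      = (nslice (o1 + Suc i) (z1 - Suc i) * (o1 + Suc i)) * (nslice (o2 - Suc i) (z2 + Suc i) * (z2 + Suc i))"
    by (simp only: nslice_pair_def mult_ac)
  also have "\<dots> = (nslice (o1 + i) (z1 - i) * (z1 - i)) * (nslice (o2 - i) (z2 + i) * (o2 - i))"
    by (simp only: a b)
  also have "\<dots> = nslice_pair (o1 + i) (z1 - i) (o2 - i) (z2 + i) * ((z1 - i) * (o2 - i))"
    by (simp only: nslice_pair_def mult_ac)
  finally show ?thesis .
qed

lemma nslice_pair_down_Suc: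
  assumes "i < o1" "i < z2"
  shows "nslice_pair (o1 - Suc i) (z1 + Suc i) (o2 + Suc i) (z2 - Suc i) * ((z1 + Suc i) * (o2 + Suc i))
       = nslice_pair (o1 - i) (z1 + i) (o2 + i) (z2 - i) * ((o1 - i) * (z2 - i))"
  using nslice_pair_up_Suc[of i o1 z2 z1 o2] assms
  by (simp add: nslice_pair_commute[of "o1 - _"] mult.commute)

definition vterm :: "nat \<Rightarrow> nat \<Rightarrow> nat \<Rightarrow> nat \<Rightarrow> nat \<Rightarrow> nat" where
  "vterm o1 z1 o2 z2 x = ((o1 + z1) choose x) * ((o2 + z2) choose (o1 + o2 - x))"

lemma sum_vterm: "(\<Sum>x\<le>o1 + o2. vterm o1 z1 o2 z2 x) = nslice (o1 + o2) (z1 + z2)"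
  unfolding vterm_def nslice_def using vandermonde[of "o1 + z1" "o2 + z2" "o1 + o2"]
  by (simp add: ac_simps)

lemma sum_vterm_le:
  "I \<subseteq> {..o1 + o2} \<Longrightarrow> (\<Sum>x\<in>I. vterm o1 z1 o2 z2 x) \<le> nslice (o1 + o2) (z1 + z2)"
  unfolding sum_vterm[symmetric] by (rule sum_mono2) auto

lemma vterm_up:
  "i \<le> z1 \<Longrightarrow> i \<le> o2 \<Longrightarrow> vterm o1 z1 o2 z2 (o1 + i) = nslice_pair (o1 + i) (z1 - i) (o2 - i) (z2 + i)"
  unfolding vterm_def nslice_pair_def nslice_def
  by (simp add: binomial_symmetric[of "o2 - i" "o2 + z2", symmetric])

lemma vterm_down:
  "i \<le> o1 \<Longrightarrow> i \<le> z2 \<Longrightarrow> vterm o1 z1 o2 z2 (o1 - i) = nslice_pair (o1 - i) (z1 + i) (o2 + i) (z2 - i)"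
  unfolding vterm_def nslice_pair_def nslice_def
  by (simp add: binomial_symmetric[of "o2 + i" "o2 + z2", symmetric])

lemma nslice_pair_le: "nslice_pair o1 z1 o2 z2 \<le> nslice (o1 + o2) (z1 + z2)"
  using sum_vterm_le[of "{o1}" o1 o2 z1 z2] vterm_up[of 0 z1 o2 o1 z2] by simp

lemma sum_symmetric_window:
  fixes a :: "nat \<Rightarrow> 'b::comm_monoid_add"
  assumes "w \<le> x0"
  shows "(\<Sum>x\<in>{x0 - w..x0 + w}. a x) = a x0 + (\<Sum>i\<in>{1..w}. a (x0 + i) + a (x0 - i))"
  using assms
proof (induction w)
  case 0
  then show ?case by simp
next
  case (Suc w)
  have eq: "{x0 - Suc w..x0 + Suc w} = insert (x0 - Suc w) (insert (x0 + Suc w) {x0 - w..x0 + w})"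
    using Suc.prems by auto
  have "x0 - Suc w \<notin> insert (x0 + Suc w) {x0 - w..x0 + w}" "x0 + Suc w \<notin> {x0 - w..x0 + w}"
    using Suc.prems by auto
  then have "(\<Sum>x\<in>{x0 - Suc w..x0 + Suc w}. a x)
      = a (x0 - Suc w) + (a (x0 + Suc w) + (\<Sum>x\<in>{x0 - w..x0 + w}. a x))"
    unfolding eq by (simp add: sum.insert)
  then show ?case
    using Suc by (simp add: sum.cl_ivl_Suc algebra_simps)
qed

(* nslice_pair o1 z1 o2 z2 is the term x = o1 of Vandermonde's convolution sum_vterm;
   pair_up i and pair_down i are its terms at x = o1 + i and x = o1 - i. *)
definition pair_up :: "nat \<Rightarrow> nat \<Rightarrow> nat \<Rightarrow> nat \<Rightarrow> nat \<Rightarrow> real" where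
  "pair_up o1 z1 o2 z2 i = real (nslice_pair (o1 + i) (z1 - i) (o2 - i) (z2 + i))"

definition pair_down :: "nat \<Rightarrow> nat \<Rightarrow> nat \<Rightarrow> nat \<Rightarrow> nat \<Rightarrow> real" where
  "pair_down o1 z1 o2 z2 i = real (nslice_pair (o1 - i) (z1 + i) (o2 + i) (z2 - i))"

lemma pair_up_down_Suc:
  assumes "i < z1" "i < o2" "i < o1" "i < z2"
  shows "pair_up o1 z1 o2 z2 (Suc i) * pair_down o1 z1 o2 z2 (Suc i) =
    pair_up o1 z1 o2 z2 i * pair_down o1 z1 o2 z2 i *
      ((real (z1 - i) / real (z1 + i + 1)) * (real (o2 - i) / real (o2 + i + 1)) *
       (real (o1 - i) / real (o1 + i + 1)) * (real (z2 - i) / real (z2 + i + 1)))"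
proof -
  have up: "pair_up o1 z1 o2 z2 (Suc i) * (real (o1 + Suc i) * real (z2 + Suc i))
      = pair_up o1 z1 o2 z2 i * (real (z1 - i) * real (o2 - i))"
    using arg_cong[OF nslice_pair_up_Suc[OF assms(1,2), of o1 z2], of real]
    unfolding pair_up_def by (simp only: of_nat_mult)
  have down: "pair_down o1 z1 o2 z2 (Suc i) * (real (z1 + Suc i) * real (o2 + Suc i))
      = pair_down o1 z1 o2 z2 i * (real (o1 - i) * real (z2 - i))"
    using arg_cong[OF nslice_pair_down_Suc[OF assms(3,4), of z1 o2], of real]
    unfolding pair_down_def by (simp only: of_nat_mult)
  have "pair_up o1 z1 o2 z2 (Suc i)
      = pair_up o1 z1 o2 z2 i * (real (z1 - i) * real (o2 - i)) / (real (o1 + Suc i) * real (z2 + Suc i))"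
    by (rule eq_divide_imp[OF _ up]) simp
  moreover have "pair_down o1 z1 o2 z2 (Suc i)
      = pair_down o1 z1 o2 z2 i * (real (o1 - i) * real (z2 - i)) / (real (z1 + Suc i) * real (o2 + Suc i))"
    by (rule eq_divide_imp[OF _ down]) simp
  ultimately show ?thesis by (simp add: field_simps)
qed

lemma ratio_diff_add_ge:
  fixes c i m :: nat
  assumes "1 \<le> m" "m \<le> c" "i < c"
  shows "1 - (2 * real i + 1) / real m \<le> real (c - i) / real (c + i + 1)"
proof -
  have "real (c - i) / real (c + i + 1) = 1 - (2 * real i + 1) / real (c + i + 1)"
    using assms by (simp add: field_simps of_nat_diff)
  moreover have "(2 * real i + 1) / real (c + i + 1) \<le> (2 * real i + 1) / real m"
    using assms by (intro divide_left_mono) auto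
  ultimately show ?thesis by simp
qed

lemma mult4_ge_one_minus:
  fixes a b c d y :: real
  assumes "1 - y \<le> a" "1 - y \<le> b" "1 - y \<le> c" "1 - y \<le> d" "0 \<le> 1 - y"
  shows "1 - 4 * y \<le> a * b * c * d"
proof -
  have "1 - 4 * y \<le> (1 - y)^4"
    using Bernoulli_inequality[of "- y" 4] assms(5) by simp
  also have "\<dots> \<le> a * b * c * d"
    unfolding power4_eq_xxxx using assms by (intro mult_mono) auto
  finally show ?thesis .
qed

lemma shift_ratios_ge:
  fixes i m :: nat
  assumes "4 * (2 * i + 1) \<le> m" "m \<le> o1" "m \<le> z1" "m \<le> o2" "m \<le> z2"
  shows "1 - 4 * ((2 * real i + 1) / m) \<le> (real (z1 - i) / real (z1 + i + 1)) * (real (o2 - i) / real (o2 + i + 1)) *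
       (real (o1 - i) / real (o1 + i + 1)) * (real (z2 - i) / real (z2 + i + 1))"
proof -
  have "real (4 * (2 * i + 1)) \<le> real m" using assms(1) by (simp only: of_nat_le_iff)
  then have nonneg: "0 \<le> 1 - (2 * real i + 1) / m" by (simp add: field_simps)
  show ?thesis
    by (rule mult4_ge_one_minus[OF _ _ _ _ nonneg]; rule ratio_diff_add_ge) (use assms in auto)
qed

lemma pair_up_down_ge:
  fixes m :: nat
  assumes "1 \<le> m" "m \<le> o1" "m \<le> z1" "m \<le> o2" "m \<le> z2"
  shows "4 * i^2 \<le> m \<Longrightarrow>
    real (nslice_pair o1 z1 o2 z2)^2 * (1 - 4 * real i^2 / m) \<le> pair_up o1 z1 o2 z2 i * pair_down o1 z1 o2 z2 i"
proof (induction i)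
  case 0
  then show ?case by (simp add: pair_up_def pair_down_def power2_eq_square)
next
  case (Suc i)
  define P where "P = real (nslice_pair o1 z1 o2 z2)"
  define y where "y = (2 * real i + 1) / m"
  have "2 * i + 1 \<le> (Suc i)^2" by (simp add: power2_eq_square)
  then have i_bound: "4 * (2 * i + 1) \<le> m" "4 * i^2 \<le> m" "i + 1 \<le> m"
    using Suc.prems by (auto simp: power2_eq_square)
  have y4: "0 \<le> 1 - 4 * y"
    using i_bound(1) assms(1) by (simp add: y_def field_simps)
  have "0 \<le> y" by (simp add: y_def)
  have ratios: "1 - 4 * y \<le> (real (z1 - i) / real (z1 + i + 1)) * (real (o2 - i) / real (o2 + i + 1)) *
       (real (o1 - i) / real (o1 + i + 1)) * (real (z2 - i) / real (z2 + i + 1))"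
    unfolding y_def by (rule shift_ratios_ge[OF i_bound(1) assms(2-5)])
  have "real (4 * i^2) \<le> real m" using i_bound(2) by (simp only: of_nat_le_iff)
  then have frac: "0 \<le> 4 * real i^2 / m" "4 * real i^2 / m \<le> 1"
    using assms(1) by (auto simp: divide_le_eq)
  have "1 - 4 * real (Suc i)^2 / m = 1 - 4 * real i^2 / m - 4 * y"
    using assms(1) by (simp add: y_def field_simps power2_eq_square)
  also have "\<dots> \<le> (1 - 4 * real i^2 / m) * (1 - 4 * y)"
  proof -
    have expand: "(1 - a) * (1 - b) = 1 - a - b + a * b" for a b :: real
      by (simp add: algebra_simps)
    show ?thesis
      using expand[of "4 * real i^2 / m" "4 * y"] mult_nonneg_nonneg[OF frac(1), of "4 * y"] \<open>0 \<le> y\<close>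
      by linarith
  qed
  finally have "P^2 * (1 - 4 * real (Suc i)^2 / m) \<le> P^2 * (1 - 4 * real i^2 / m) * (1 - 4 * y)"
    unfolding mult.assoc by (rule mult_left_mono) simp
  also have "\<dots> \<le> pair_up o1 z1 o2 z2 i * pair_down o1 z1 o2 z2 i *
      ((real (z1 - i) / real (z1 + i + 1)) * (real (o2 - i) / real (o2 + i + 1)) *
       (real (o1 - i) / real (o1 + i + 1)) * (real (z2 - i) / real (z2 + i + 1)))"
    using Suc.IH[OF i_bound(2)] ratios y4
    by (intro mult_mono[where c="1 - 4 * y"]) (auto simp: P_def pair_up_def pair_down_def)
  also have "\<dots> = pair_up o1 z1 o2 z2 (Suc i) * pair_down o1 z1 o2 z2 (Suc i)"
    using i_bound(3) assms by (intro pair_up_down_Suc[symmetric]) auto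
  finally show ?case by (simp add: P_def)
qed

lemma add_ge_of_mult_ge:
  fixes u d p :: real
  assumes "p^2 / 4 \<le> u * d" "0 \<le> u" "0 \<le> d" "0 \<le> p"
  shows "p \<le> u + d"
proof -
  have "(u + d)^2 = (u - d)^2 + 4 * (u * d)" by (simp add: power2_eq_square algebra_simps)
  then have "p^2 \<le> (u + d)^2" using assms(1) zero_le_power2[of "u - d"] by linarith
  then show ?thesis by (rule power2_le_imp_le) (use assms in simp)
qed

lemma pair_window_le:
  assumes "w \<le> o1" "w \<le> z1" "w \<le> o2" "w \<le> z2"
  shows "real (nslice_pair o1 z1 o2 z2) + (\<Sum>i\<in>{1..w}. pair_up o1 z1 o2 z2 i + pair_down o1 z1 o2 z2 i)
    \<le> real (nslice (o1 + o2) (z1 + z2))"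
proof -
  have "(\<Sum>x\<in>{o1 - w..o1 + w}. vterm o1 z1 o2 z2 x)
      = vterm o1 z1 o2 z2 o1 + (\<Sum>i\<in>{1..w}. vterm o1 z1 o2 z2 (o1 + i) + vterm o1 z1 o2 z2 (o1 - i))"
    using assms by (intro sum_symmetric_window) auto
  also have "\<dots> = nslice_pair o1 z1 o2 z2
      + (\<Sum>i\<in>{1..w}. nslice_pair (o1 + i) (z1 - i) (o2 - i) (z2 + i) + nslice_pair (o1 - i) (z1 + i) (o2 + i) (z2 - i))"
    using assms vterm_up[of 0 z1 o2 o1 z2] by (simp add: vterm_up vterm_down)
  finally have "nslice_pair o1 z1 o2 z2
      + (\<Sum>i\<in>{1..w}. nslice_pair (o1 + i) (z1 - i) (o2 - i) (z2 + i) + nslice_pair (o1 - i) (z1 + i) (o2 + i) (z2 - i))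
      \<le> nslice (o1 + o2) (z1 + z2)"
    using sum_vterm_le[of "{o1 - w..o1 + w}" o1 o2 z1 z2] assms by simp
  then have "real (nslice_pair o1 z1 o2 z2
      + (\<Sum>i\<in>{1..w}. nslice_pair (o1 + i) (z1 - i) (o2 - i) (z2 + i) + nslice_pair (o1 - i) (z1 + i) (o2 + i) (z2 - i)))
      \<le> real (nslice (o1 + o2) (z1 + z2))"
    by (simp only: of_nat_le_iff)
  then show ?thesis by (simp add: pair_up_def pair_down_def)
qed

lemma nslice_pair_window:
  fixes m w :: nat
  assumes "1 \<le> m" "m \<le> o1" "m \<le> z1" "m \<le> o2" "m \<le> z2" and "16 * w^2 \<le> 3 * m"
  shows "(1 + real w) * real (nslice_pair o1 z1 o2 z2) \<le> real (nslice (o1 + o2) (z1 + z2))"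
proof -
  define P where "P = real (nslice_pair o1 z1 o2 z2)"
  have "P \<le> pair_up o1 z1 o2 z2 i + pair_down o1 z1 o2 z2 i" if i: "i \<in> {1..w}" for i
  proof -
    have "i^2 \<le> w^2" using i by (intro power_mono) auto
    then have i16: "16 * i^2 \<le> 3 * m" using assms(6) by linarith
    then have "real (16 * i^2) \<le> real (3 * m)" by (simp only: of_nat_le_iff)
    then have "1/4 \<le> 1 - 4 * real i^2 / m" using assms(1) by (simp add: divide_le_eq)
    then have "P^2 * (1/4) \<le> P^2 * (1 - 4 * real i^2 / m)"
      by (rule mult_left_mono) simp
    then have "P^2 / 4 \<le> P^2 * (1 - 4 * real i^2 / m)" by simp
    also have "\<dots> \<le> pair_up o1 z1 o2 z2 i * pair_down o1 z1 o2 z2 i"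
      unfolding P_def using i16 by (intro pair_up_down_ge assms(1-5)) linarith
    finally show ?thesis
      by (rule add_ge_of_mult_ge) (auto simp: pair_up_def pair_down_def P_def)
  qed
  then have "(\<Sum>i\<in>{1..w}. P) \<le> (\<Sum>i\<in>{1..w}. pair_up o1 z1 o2 z2 i + pair_down o1 z1 o2 z2 i)"
    by (rule sum_mono)
  then have "real w * P \<le> (\<Sum>i\<in>{1..w}. pair_up o1 z1 o2 z2 i + pair_down o1 z1 o2 z2 i)"
    by simp
  moreover have "w \<le> w^2" by (simp add: power2_eq_square)
  then have "w \<le> m" using assms(6) by linarith
  then have "P + (\<Sum>i\<in>{1..w}. pair_up o1 z1 o2 z2 i + pair_down o1 z1 o2 z2 i)
      \<le> real (nslice (o1 + o2) (z1 + z2))"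
    unfolding P_def using assms by (intro pair_window_le) auto
  ultimately show ?thesis by (simp add: P_def algebra_simps)
qed

lemma three_nslice_pair_le:
  assumes "1 \<le> o1" "1 \<le> z1" "1 \<le> o2" "1 \<le> z2"
  shows "3 * real (nslice_pair o1 z1 o2 z2) \<le> 2 * real (nslice (o1 + o2) (z1 + z2))"
proof -
  define P where "P = real (nslice_pair o1 z1 o2 z2)"
  have half: "1/2 \<le> real c / real (c + 0 + 1)" if "1 \<le> c" for c :: nat
    using that by (simp add: field_simps)
  define R where "R = (real (z1 - 0) / real (z1 + 0 + 1)) * (real (o2 - 0) / real (o2 + 0 + 1)) *
       (real (o1 - 0) / real (o1 + 0 + 1)) * (real (z2 - 0) / real (z2 + 0 + 1))"
  have "pair_up o1 z1 o2 z2 1 * pair_down o1 z1 o2 z2 1 = P * P * R"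
    using pair_up_down_Suc[of 0 z1 o2 o1 z2] assms by (simp add: P_def R_def pair_up_def pair_down_def)
  moreover have "1/2 * (1/2) * (1/2) * (1/2) \<le> R"
    unfolding R_def using half assms by (intro mult_mono) (auto simp del: add_0_right)
  then have "P * P * (1/2 * (1/2) * (1/2) * (1/2)) \<le> P * P * R"
    by (rule mult_left_mono) simp
  ultimately have "(P/2)^2 / 4 \<le> pair_up o1 z1 o2 z2 1 * pair_down o1 z1 o2 z2 1"
    by (simp add: power2_eq_square)
  then have "P/2 \<le> pair_up o1 z1 o2 z2 1 + pair_down o1 z1 o2 z2 1"
    by (rule add_ge_of_mult_ge) (auto simp: pair_up_def pair_down_def P_def)
  moreover have "P + (\<Sum>i\<in>{1..1}. pair_up o1 z1 o2 z2 i + pair_down o1 z1 o2 z2 i)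
      \<le> real (nslice (o1 + o2) (z1 + z2))"
    unfolding P_def using assms by (intro pair_window_le) auto
  ultimately show ?thesis by (simp add: P_def)
qed

lemma nslice_pair_shift_down_ge:
  assumes "e \<le> o1" "e \<le> z2"
    and "\<And>s. s < e \<Longrightarrow> c * ((z1 + Suc s) * (o2 + Suc s)) \<le> (o1 - s) * (z2 - s)"
  shows "c^e * nslice_pair o1 z1 o2 z2 \<le> nslice_pair (o1 - e) (z1 + e) (o2 + e) (z2 - e)"
  using assms
proof (induction e)
  case 0
  then show ?case by simp
next
  case (Suc e)
  define Q where "Q = nslice_pair (o1 - e) (z1 + e) (o2 + e) (z2 - e)"
  define X where "X = (z1 + Suc e) * (o2 + Suc e)"
  have "c * X \<le> (o1 - e) * (z2 - e)" using Suc.prems(3)[of e] by (simp add: X_def)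
  then have "Q * (c * X) \<le> Q * ((o1 - e) * (z2 - e))" by (rule mult_le_mono2)
  then have "c * Q * X \<le> Q * ((o1 - e) * (z2 - e))" by (simp only: ac_simps)
  also have "\<dots> = nslice_pair (o1 - Suc e) (z1 + Suc e) (o2 + Suc e) (z2 - Suc e) * X"
    unfolding Q_def X_def using Suc.prems by (intro nslice_pair_down_Suc[symmetric]) auto
  finally have "c * Q \<le> nslice_pair (o1 - Suc e) (z1 + Suc e) (o2 + Suc e) (z2 - Suc e)"
    using mult_le_cancel2[of "c * Q" X] by (simp add: X_def del: mult_le_cancel2)
  moreover have "c^e * nslice_pair o1 z1 o2 z2 \<le> Q"
    unfolding Q_def using Suc by auto
  ultimately show ?case
    by (metis mult_le_mono2 order_trans power_Suc mult.assoc)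
qed

lemma pow_mult_nslice_pair_le:
  assumes "e \<le> o1" "e \<le> z2"
    and "\<And>s. s < e \<Longrightarrow> c * ((z1 + Suc s) * (o2 + Suc s)) \<le> (o1 - s) * (z2 - s)"
  shows "c^e * nslice_pair o1 z1 o2 z2 \<le> nslice (o1 + o2) (z1 + z2)"
proof -
  have "c^e * nslice_pair o1 z1 o2 z2 \<le> vterm o1 z1 o2 z2 (o1 - e)"
    using nslice_pair_shift_down_ge[OF assms] assms(1,2) by (simp add: vterm_down)
  also have "\<dots> \<le> nslice (o1 + o2) (z1 + z2)"
    using sum_vterm_le[of "{o1 - e}" o1 o2 z1 z2] by simp
  finally show ?thesis .
qed

lemma Suc_mult_nslice_pair_le:
  assumes "e \<le> o1" "e \<le> z2"
    and "\<And>s. s < e \<Longrightarrow> (z1 + Suc s) * (o2 + Suc s) \<le> (o1 - s) * (z2 - s)"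
  shows "(1 + e) * nslice_pair o1 z1 o2 z2 \<le> nslice (o1 + o2) (z1 + z2)"
proof -
  have "nslice_pair o1 z1 o2 z2 \<le> vterm o1 z1 o2 z2 (o1 - i)" if "i \<in> {0..e}" for i
    using nslice_pair_shift_down_ge[of i o1 z2 1 z1 o2] that assms by (simp add: vterm_down)
  then have "(\<Sum>i\<in>{0..e}. nslice_pair o1 z1 o2 z2) \<le> (\<Sum>i\<in>{0..e}. vterm o1 z1 o2 z2 (o1 - i))"
    by (rule sum_mono)
  also have "\<dots> = (\<Sum>x\<in>(\<lambda>i. o1 - i) ` {0..e}. vterm o1 z1 o2 z2 x)"
    using assms(1) by (subst sum.reindex) (auto simp: inj_on_def)
  also have "\<dots> \<le> nslice (o1 + o2) (z1 + z2)"
    by (rule sum_vterm_le) auto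
  finally show ?thesis by simp
qed

lemma exists_square_bracket: "\<exists>w::nat. 16 * w^2 \<le> N \<and> N < 16 * (w + 1)^2"
proof (induction N)
  case 0
  then show ?case by (intro exI[of _ 0]) simp
next
  case (Suc N)
  then obtain w where w: "16 * w^2 \<le> N" "N < 16 * (w + 1)^2" by auto
  show ?case
  proof (cases "Suc N < 16 * (w + 1)^2")
    case True
    then show ?thesis using w by (intro exI[of _ w]) auto
  next
    case False
    then have "Suc N = 16 * (w + 1)^2" using w by linarith
    moreover have "(w + 1)^2 < (w + 2)^2" by (intro power_strict_mono) auto
    ultimately show ?thesis by (intro exI[of _ "w + 1"]) auto
  qed
qed

lemma nslice_pair_sq_le:
  assumes "1 \<le> m" "m \<le> o1" "m \<le> z1" "m \<le> o2" "m \<le> z2"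
  shows "real (nslice_pair o1 z1 o2 z2)^2 * m \<le> 16/3 * real (nslice (o1 + o2) (z1 + z2))^2"
proof -
  define P where "P = real (nslice_pair o1 z1 o2 z2)"
  define C where "C = real (nslice (o1 + o2) (z1 + z2))"
  obtain w :: nat where w: "16 * w^2 \<le> 3 * m" "3 * m < 16 * (w + 1)^2"
    using exists_square_bracket by blast
  have window: "(1 + real w) * P \<le> C"
    unfolding P_def C_def using assms w(1) by (rule nslice_pair_window)
  have "real (3 * m) < real (16 * (w + 1)^2)" using w(2) by (simp only: of_nat_less_iff)
  then have "P^2 * (3 * real m) \<le> P^2 * (16 * (1 + real w)^2)"
    by (intro mult_left_mono) (auto simp: add.commute)
  also have "\<dots> = 16 * ((1 + real w) * P)^2" by (simp add: power_mult_distrib)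
  also have "\<dots> \<le> 16 * C^2"
    using window nslice_pair_pos[of o1 z1 o2 z2] by (intro mult_left_mono power_mono) (auto simp: P_def)
  finally show ?thesis by (simp add: P_def C_def)
qed

lemma superlin_step_balanced:
  assumes "o1 \<le> z1" "o2 \<le> z2" "1 \<le> o1" "o1 \<le> o2"
  shows "real (nslice_pair o1 z1 o2 z2) * superlin (o1 + o2)
    \<le> 2 * (real (nslice (o1 + o2) (z1 + z2)) - real (nslice_pair o1 z1 o2 z2)) * real (o1 + o2)
      + real (nslice (o1 + o2) (z1 + z2)) * superlin o2"
proof (rule superlin_step_ratio)
  have "real (nslice_pair o1 z1 o2 z2)^2 * o1 \<le> 16/3 * real (nslice (o1 + o2) (z1 + z2))^2"
    using assms by (intro nslice_pair_sq_le) auto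
  then show "real (nslice_pair o1 z1 o2 z2)^2 * (real (o1 + o2) - real o2)
      \<le> 32/3 * real (nslice (o1 + o2) (z1 + z2))^2"
    by simp (use zero_le_power2[of "real (nslice (o1 + o2) (z1 + z2))"] in linarith)
  show "3 * real (nslice_pair o1 z1 o2 z2) \<le> 2 * real (nslice (o1 + o2) (z1 + z2))"
    using assms by (intro three_nslice_pair_le) auto
qed (use assms nslice_pos[of "o1 + o2" "z1 + z2"] in auto)

(* Unbalanced configuration: the first block has d more ones than zeros and the second at
   least d more zeros than ones, so the Vandermonde terms grow when ones move from the first
   block to the second. *)
lemma unbalanced_Suc_mult_le:
  assumes "o1 = z1 + d" "o2 + d \<le> z2" "2 * e \<le> d + 1"
  shows "(1 + e) * nslice_pair o1 z1 o2 z2 \<le> nslice (o1 + o2) (z1 + z2)"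
proof (rule Suc_mult_nslice_pair_le)
  show "e \<le> o1" "e \<le> z2" using assms by auto
  fix s assume "s < e"
  then have "z1 + Suc s \<le> o1 - s" "o2 + Suc s \<le> z2 - s" using assms by auto
  then show "(z1 + Suc s) * (o2 + Suc s) \<le> (o1 - s) * (z2 - s)" by (rule mult_le_mono)
qed

lemma unbalanced_pow_mult_le:
  assumes "o1 = z1 + d" "o2 + d \<le> z2" "6 * max z1 o2 < d"
  shows "4 ^ (d div 4) * nslice_pair o1 z1 o2 z2 \<le> nslice (o1 + o2) (z1 + z2)"
proof (rule pow_mult_nslice_pair_le)
  show "d div 4 \<le> o1" "d div 4 \<le> z2" using assms by auto
  fix s assume "s < d div 4"
  then have "2 * (z1 + Suc s) \<le> o1 - s" "2 * (o2 + Suc s) \<le> z2 - s" using assms by auto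
  then have "(2 * (z1 + Suc s)) * (2 * (o2 + Suc s)) \<le> (o1 - s) * (z2 - s)" by (rule mult_le_mono)
  moreover have "(2 * a) * (2 * b) = 4 * (a * b)" for a b :: nat by simp
  ultimately show "4 * ((z1 + Suc s) * (o2 + Suc s)) \<le> (o1 - s) * (z2 - s)" by metis
qed

lemma sq_mult_le_of_mult_le:
  fixes d P C :: real
  assumes "0 \<le> d" "0 \<le> P" "(d + 2) * P \<le> 2 * C"
  shows "P^2 * (2 * d) \<le> 2 * C^2"
proof -
  have "P^2 * (2 * d) * (d + 2)^2 = ((d + 2) * P)^2 * (2 * d)"
    by (simp add: power_mult_distrib)
  also have "\<dots> \<le> (2 * C)^2 * (2 * d)"
    using assms by (intro mult_right_mono power_mono) auto
  also have "\<dots> \<le> 2 * C^2 * (d + 2)^2"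
  proof -
    have "C^2 * (8 * d) \<le> C^2 * (2 * (d + 2)^2)"
      by (intro mult_left_mono) (auto simp: power2_eq_square algebra_simps)
    then show ?thesis by (simp add: power_mult_distrib algebra_simps)
  qed
  finally show ?thesis
    by (rule mult_right_le_imp_le) (use assms(1) in simp)
qed

lemma unbalanced_sq_le:
  assumes "o1 = z1 + d" "o2 + d \<le> z2" "1 \<le> d"
  shows "real (nslice_pair o1 z1 o2 z2)^2 * real (min z1 o2 + d)
    \<le> 32/3 * real (nslice (o1 + o2) (z1 + z2))^2"
proof -
  define P where "P = real (nslice_pair o1 z1 o2 z2)"
  define C where "C = real (nslice (o1 + o2) (z1 + z2))"
  have P1: "1 \<le> P" using nslice_pair_pos[of o1 z1 o2 z2] by (simp add: P_def)
  show ?thesis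
  proof (cases "d \<le> min z1 o2")
    case True
    have "P^2 * real (min z1 o2) \<le> 16/3 * C^2"
      unfolding P_def C_def using assms True by (intro nslice_pair_sq_le) auto
    moreover have "P^2 * real (min z1 o2 + d) \<le> P^2 * (2 * real (min z1 o2))"
      using True by (intro mult_left_mono) auto
    ultimately show ?thesis by (simp add: P_def C_def)
  next
    case False
    define e where "e = (d + 1) div 2"
    have "(1 + e) * nslice_pair o1 z1 o2 z2 \<le> nslice (o1 + o2) (z1 + z2)"
      using assms by (intro unbalanced_Suc_mult_le) (auto simp: e_def)
    then have "real ((1 + e) * nslice_pair o1 z1 o2 z2) \<le> C"
      unfolding C_def by (simp only: of_nat_le_iff)
    then have "(1 + real e) * P \<le> C" by (simp add: P_def algebra_simps)
    moreover have "(real d + 2) * P \<le> 2 * (1 + real e) * P"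
      using P1 by (intro mult_right_mono) (auto simp: e_def)
    ultimately have "(real d + 2) * P \<le> 2 * C" by linarith
    then have "P^2 * (2 * real d) \<le> 2 * C^2"
      using P1 by (intro sq_mult_le_of_mult_le) auto
    moreover have "P^2 * real (min z1 o2 + d) \<le> P^2 * (2 * real d)"
      using False by (intro mult_left_mono) auto
    ultimately have "P^2 * real (min z1 o2 + d) \<le> 2 * C^2" by linarith
    then have "P^2 * real (min z1 o2 + d) \<le> 32/3 * C^2" using zero_le_power2[of C] by linarith
    then show ?thesis by (simp add: P_def C_def)
  qed
qed

lemma superlin_step_unbalanced:
  assumes "z1 < o1" "o1 + o2 \<le> z1 + z2"
  shows "real (nslice_pair o1 z1 o2 z2) * superlin (o1 + o2)
    \<le> 2 * (real (nslice (o1 + o2) (z1 + z2)) - real (nslice_pair o1 z1 o2 z2)) * real (o1 + o2)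
      + real (nslice (o1 + o2) (z1 + z2)) * (superlin z1 + superlin o2)"
proof -
  define P where "P = real (nslice_pair o1 z1 o2 z2)"
  define C where "C = real (nslice (o1 + o2) (z1 + z2))"
  define d where "d = o1 - z1"
  define M where "M = max z1 o2"
  have d: "o1 = z1 + d" "o2 + d \<le> z2" "1 \<le> d" using assms by (auto simp: d_def)
  have t: "o1 + o2 = M + (min z1 o2 + d)" using d(1) by (auto simp: M_def)
  have P0: "0 \<le> P" by (simp add: P_def)
  have "(1 + 1) * nslice_pair o1 z1 o2 z2 \<le> nslice (o1 + o2) (z1 + z2)"
    using d by (intro unbalanced_Suc_mult_le) auto
  then have "real ((1 + 1) * nslice_pair o1 z1 o2 z2) \<le> C"
    unfolding C_def by (simp only: of_nat_le_iff)
  then have half: "2 * P \<le> C" by (simp add: P_def)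
  have "P * superlin (o1 + o2) \<le> 2 * (C - P) * real (o1 + o2) + C * superlin M"
  proof (rule superlin_step_ratio)
    show "P^2 * (real (o1 + o2) - real M) \<le> 32/3 * C^2"
      using unbalanced_sq_le[OF d] t by (simp add: P_def C_def)
    show "o1 + o2 \<le> 8 * M \<or> (2 * P \<le> C \<and> (\<exists>i::nat. 3 * (o1 + o2) \<le> 16 * i + 11 \<and> P * 4^i \<le> C))"
    proof (cases "o1 + o2 \<le> 8 * M")
      case False
      then have big: "6 * max z1 o2 < d" using t by (simp add: M_def)
      have "4 ^ (d div 4) * nslice_pair o1 z1 o2 z2 \<le> nslice (o1 + o2) (z1 + z2)"
        using d big by (intro unbalanced_pow_mult_le) auto
      then have "real (4 ^ (d div 4) * nslice_pair o1 z1 o2 z2) \<le> C"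
        unfolding C_def by (simp only: of_nat_le_iff)
      then have "P * 4 ^ (d div 4) \<le> C" by (simp add: P_def mult.commute)
      moreover have "3 * (o1 + o2) \<le> 16 * (d div 4) + 11" using t big by (simp add: M_def)
      ultimately show ?thesis using half by auto
    qed simp
  qed (use half P0 t d nslice_pos[of "o1 + o2" "z1 + z2"] in \<open>auto simp: C_def\<close>)
  also have "C * superlin M \<le> C * (superlin z1 + superlin o2)"
    using superlin_nonneg[of z1] superlin_nonneg[of o2] half P0
    by (intro mult_left_mono) (auto simp: M_def max_def)
  finally show ?thesis by (simp add: P_def C_def)
qed

lemma superlin_concat_le_balanced:
  assumes "o1 \<le> z1" "o2 \<le> z2"
  shows "real (nslice_pair o1 z1 o2 z2) * superlin (o1 + o2)
    \<le> 2 * (real (nslice (o1 + o2) (z1 + z2)) - real (nslice_pair o1 z1 o2 z2)) * real (o1 + o2)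
      + real (nslice (o1 + o2) (z1 + z2)) * (superlin o1 + superlin o2)"
proof -
  define P where "P = real (nslice_pair o1 z1 o2 z2)"
  define C where "C = real (nslice (o1 + o2) (z1 + z2))"
  have PC: "P \<le> C" using nslice_pair_le[of o1 z1 o2 z2] by (simp add: P_def C_def)
  have H: "0 \<le> C * superlin o1" "0 \<le> C * superlin o2" by (simp_all add: C_def superlin_nonneg)
  consider "o1 = 0 \<or> o2 = 0" | "1 \<le> o1" "o1 \<le> o2" | "1 \<le> o2" "o2 \<le> o1" by linarith
  then have "P * superlin (o1 + o2) \<le> 2 * (C - P) * real (o1 + o2) + C * (superlin o1 + superlin o2)"
  proof cases
    case 1
    have "P * superlin (o1 + o2) \<le> C * superlin (o1 + o2)"
      using PC superlin_nonneg[of "o1 + o2"] by (intro mult_right_mono) auto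
    also have "\<dots> \<le> C * (superlin o1 + superlin o2)"
      using 1 H by (auto simp: distrib_left)
    finally have "P * superlin (o1 + o2) \<le> C * (superlin o1 + superlin o2)" .
    moreover have "0 \<le> 2 * (C - P) * real (o1 + o2)" using PC by simp
    ultimately show ?thesis by linarith
  next
    case 2
    then have "P * superlin (o1 + o2) \<le> 2 * (C - P) * real (o1 + o2) + C * superlin o2"
      unfolding P_def C_def using assms by (intro superlin_step_balanced) auto
    then show ?thesis using H unfolding distrib_left by linarith
  next
    case 3
    then have "real (nslice_pair o2 z2 o1 z1) * superlin (o2 + o1)
        \<le> 2 * (real (nslice (o2 + o1) (z2 + z1)) - real (nslice_pair o2 z2 o1 z1)) * real (o2 + o1)
          + real (nslice (o2 + o1) (z2 + z1)) * superlin o1"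
      using assms by (intro superlin_step_balanced) auto
    then have "P * superlin (o1 + o2) \<le> 2 * (C - P) * real (o1 + o2) + C * superlin o1"
      by (simp add: P_def C_def nslice_pair_swap[of o2] add.commute)
    then show ?thesis using H unfolding distrib_left by linarith
  qed
  then show ?thesis by (simp add: P_def C_def)
qed

lemma superlin_concat_le:
  assumes "o1 + o2 \<le> z1 + z2"
  shows "real (nslice_pair o1 z1 o2 z2) * superlin (o1 + o2)
    \<le> 2 * (real (nslice (o1 + o2) (z1 + z2)) - real (nslice_pair o1 z1 o2 z2)) * real (o1 + o2)
      + real (nslice (o1 + o2) (z1 + z2)) * (superlin (min o1 z1) + superlin (min o2 z2))"
proof -
  consider "z1 < o1" | "z2 < o2" | "o1 \<le> z1" "o2 \<le> z2" by linarith
  then show ?thesis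
  proof cases
    case 1
    then show ?thesis
      using superlin_step_unbalanced[OF 1 assms] assms by (simp add: min_def)
  next
    case 2
    have "nslice_pair o2 z2 o1 z1 = nslice_pair o1 z1 o2 z2"
      "nslice (o2 + o1) (z2 + z1) = nslice (o1 + o2) (z1 + z2)"
      by (simp_all add: nslice_pair_swap add.commute)
    then show ?thesis
      using superlin_step_unbalanced[OF 2, of o1 z1] 2 assms by (simp add: min_def add.commute)
  next
    case 3
    then show ?thesis using superlin_concat_le_balanced[OF 3] by (simp add: min_def)
  qed
qed

definition slice_weight :: "nat \<Rightarrow> nat \<Rightarrow> real" where
  "slice_weight x y = superlin (min x y) + real (x + y)"

lemma slice_weight_commute: "slice_weight x y = slice_weight y x"
  by (simp add: slice_weight_def min.commute add.commute)

lemma slice_weight_nonneg: "0 \<le> slice_weight x y"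
  by (simp add: slice_weight_def superlin_nonneg)

lemma slice_weight_concat_le_of_ones_le:
  assumes "o1 + o2 \<le> z1 + z2"
  shows "real (nslice_pair o1 z1 o2 z2) * slice_weight (o1 + o2) (z1 + z2)
    \<le> real (nslice (o1 + o2) (z1 + z2)) * (1 + slice_weight o1 z1 + slice_weight o2 z2)"
proof -
  define P where "P = real (nslice_pair o1 z1 o2 z2)"
  define C where "C = real (nslice (o1 + o2) (z1 + z2))"
  have "0 \<le> P" "P \<le> C" using nslice_pair_le[of o1 z1 o2 z2] by (simp_all add: P_def C_def)
  then have "(C - P) * (2 * real (o1 + o2)) \<le> (C - P) * real (o1 + z1 + (o2 + z2))"
    using assms by (intro mult_left_mono) auto
  then have "P * slice_weight (o1 + o2) (z1 + z2)
      \<le> C * (superlin (min o1 z1) + superlin (min o2 z2)) + C * real (o1 + z1 + (o2 + z2))"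
    using superlin_concat_le[OF assms] assms
    by (simp add: slice_weight_def P_def C_def min_def algebra_simps)
  then show ?thesis
    using \<open>0 \<le> P\<close> \<open>P \<le> C\<close> by (simp add: slice_weight_def P_def C_def algebra_simps)
qed

lemma slice_weight_concat_le:
  "real (nslice_pair o1 z1 o2 z2) * slice_weight (o1 + o2) (z1 + z2)
    \<le> real (nslice (o1 + o2) (z1 + z2)) * (1 + slice_weight o1 z1 + slice_weight o2 z2)"
proof (cases "o1 + o2 \<le> z1 + z2")
  case True
  then show ?thesis by (rule slice_weight_concat_le_of_ones_le)
next
  case False
  then have "real (nslice_pair z1 o1 z2 o2) * slice_weight (z1 + z2) (o1 + o2)
      \<le> real (nslice (z1 + z2) (o1 + o2)) * (1 + slice_weight z1 o1 + slice_weight z2 o2)"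
    by (intro slice_weight_concat_le_of_ones_le) auto
  then show ?thesis
    by (simp add: nslice_pair_commute[of z1] nslice_commute[of "z1 + z2"] slice_weight_commute)
qed

lemma lang_nonempty: "lang r \<noteq> {}"
  by (induction r) auto

lemma lang_Concat_image: "lang (Concat r s) = (\<lambda>(u, v). u @ v) ` (lang r \<times> lang s)"
  by auto

lemma finite_lang: "finite (lang r)"
  by (induction r) (auto simp: lang_Concat_image simp del: lang.simps(4))

lemma lang_Concat_measure:
  fixes f :: "'a list \<Rightarrow> nat"
  assumes "\<forall>w\<in>lang (Concat r s). f w = N" and "\<And>u v. f (u @ v) = f u + f v"
  obtains Nr Ns where "\<forall>u\<in>lang r. f u = Nr" "\<forall>v\<in>lang s. f v = Ns" "Nr + Ns = N"
proof -
  obtain u0 v0 where u0: "u0 \<in> lang r" and v0: "v0 \<in> lang s"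
    using lang_nonempty[of r] lang_nonempty[of s] by blast
  have sum: "f u + f v = N" if "u \<in> lang r" "v \<in> lang s" for u v
  proof -
    have "u @ v \<in> lang (Concat r s)" using that by auto
    then have "f (u @ v) = N" using assms(1) by blast
    then show ?thesis using assms(2) by simp
  qed
  show thesis
  proof (rule that[of "f u0" "f v0"])
    show "\<forall>u\<in>lang r. f u = f u0"
      using sum[OF _ v0] sum[OF u0 v0] by (metis add_right_cancel)
    show "\<forall>v\<in>lang s. f v = f v0"
      using sum[OF u0] sum[OF u0 v0] by (metis add_left_cancel)
  qed (rule sum[OF u0 v0])
qed

lemma ones_append [simp]: "ones (u @ v) = ones u + ones v"
  by (simp add: ones_def)

lemma ones_Cons [simp]: "ones (x # w) = (if x then 1 else 0) + ones w"
  by (simp add: ones_def)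

lemma ones_Nil [simp]: "ones [] = 0"
  by (simp add: ones_def)

lemma ones_le_length: "ones w \<le> length w"
  by (simp add: ones_def)

lemma lang_Concat_slice:
  assumes "\<forall>w\<in>lang (Concat r s). length w = x + y \<and> ones w = x"
  obtains o1 z1 o2 z2 where "\<forall>u\<in>lang r. length u = o1 + z1 \<and> ones u = o1"
    "\<forall>v\<in>lang s. length v = o2 + z2 \<and> ones v = o2" "x = o1 + o2" "y = z1 + z2"
proof -
  have "\<forall>w\<in>lang (Concat r s). length w = x + y" "\<forall>w\<in>lang (Concat r s). ones w = x"
    using assms by auto
  obtain nr ns where n: "\<forall>u\<in>lang r. length u = nr" "\<forall>v\<in>lang s. length v = ns" "nr + ns = x + y"
    by (rule lang_Concat_measure[OF \<open>\<forall>w\<in>lang (Concat r s). length w = x + y\<close>]) auto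
  obtain o1 o2 where o: "\<forall>u\<in>lang r. ones u = o1" "\<forall>v\<in>lang s. ones v = o2" "o1 + o2 = x"
    by (rule lang_Concat_measure[OF \<open>\<forall>w\<in>lang (Concat r s). ones w = x\<close>]) auto
  have "o1 \<le> nr" "o2 \<le> ns"
    using n o lang_nonempty[of r] lang_nonempty[of s] ones_le_length by fastforce+
  then show thesis
    using n o by (intro that[of o1 "nr - o1" o2 "ns - o2"]) auto
qed

lemma card_slice: "card {w :: bool list. length w = n \<and> ones w = k} = n choose k"
proof (induction n arbitrary: k)
  case 0
  have "{w :: bool list. length w = 0 \<and> ones w = k} = (if k = 0 then {[]} else {})" by auto
  then show ?case by simp
next
  case (Suc n)
  have fin: "finite {w :: bool list. length w = n \<and> P w}" for P
    by (rule finite_subset[OF _ finite_lists_length_eq[of "UNIV :: bool set" n]]) auto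
  have eq: "{w :: bool list. length w = Suc n \<and> ones w = k} =
    Cons True ` {w. length w = n \<and> ones w + 1 = k} \<union> Cons False ` {w. length w = n \<and> ones w = k}"
  proof (rule set_eqI)
    fix w :: "bool list"
    show "w \<in> {w. length w = Suc n \<and> ones w = k} \<longleftrightarrow>
      w \<in> Cons True ` {w. length w = n \<and> ones w + 1 = k} \<union> Cons False ` {w. length w = n \<and> ones w = k}"
      by (cases w) auto
  qed
  have "card {w :: bool list. length w = Suc n \<and> ones w = k}
      = card {w :: bool list. length w = n \<and> ones w + 1 = k} + (n choose k)"
    unfolding eq using fin Suc.IH[of k]
    by (subst card_Un_disjoint) (auto simp: card_image inj_on_def)
  moreover have "card {w :: bool list. length w = n \<and> ones w + 1 = k} = (if k = 0 then 0 else n choose (k - 1))"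
    using Suc.IH[of "k - 1"] by (cases k) auto
  ultimately show ?case by (cases k) auto
qed

lemma card_le_binomial_if_slice:
  assumes "\<forall>w\<in>A. length w = n \<and> ones w = k"
  shows "card A \<le> n choose k"
proof -
  have "finite {w :: bool list. length w = n \<and> ones w = k}"
    by (rule finite_subset[OF _ finite_lists_length_eq[of "UNIV :: bool set" n]]) auto
  then have "card A \<le> card {w :: bool list. length w = n \<and> ones w = k}"
    by (rule card_mono) (use assms in auto)
  then show ?thesis by (simp add: card_slice)
qed

lemma card_lang_Concat_le: "card (lang (Concat r s)) \<le> card (lang r) * card (lang s)"
proof -
  have "card (lang (Concat r s)) \<le> card (lang r \<times> lang s)"
    unfolding lang_Concat_image using finite_lang[of r] finite_lang[of s] by (intro card_image_le) simp
  then show ?thesis by (simp add: card_cartesian_product)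
qed

lemma concat_density_step:
  fixes a b c1 c2 c f f1 f2 s1 s2 n :: real
  assumes "f1 * a \<le> s1 * c1" "f2 * b \<le> s2 * c2" "0 \<le> a" "a \<le> c1" "0 \<le> b" "b \<le> c2"
    and "0 < c1" "0 < c2" "0 \<le> c" "0 \<le> s1" "0 \<le> s2" "0 \<le> f" "n \<le> a * b"
    and "c1 * c2 * f \<le> c * (1 + f1 + f2)"
  shows "f * n \<le> (1 + s1 + s2) * c"
proof -
  have "c1 * c2 * (f * n) \<le> c1 * c2 * (f * (a * b))"
    using assms by (intro mult_left_mono) auto
  also have "\<dots> = (c1 * c2 * f) * (a * b)" by simp
  also have "\<dots> \<le> c * (1 + f1 + f2) * (a * b)"
    using assms by (intro mult_right_mono) auto
  also have "\<dots> = c * (a * b + (f1 * a) * b + (f2 * b) * a)" by (simp add: algebra_simps)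
  also have "\<dots> \<le> c * (c1 * c2 + (s1 * c1) * c2 + (s2 * c2) * c1)"
  proof -
    have "a * b \<le> c1 * c2" by (rule mult_mono) (use assms in auto)
    moreover have "(f1 * a) * b \<le> (s1 * c1) * c2" by (rule mult_mono) (use assms in auto)
    moreover have "(f2 * b) * a \<le> (s2 * c2) * c1" by (rule mult_mono) (use assms in auto)
    ultimately show ?thesis using assms(9) by (intro mult_left_mono) auto
  qed
  also have "\<dots> = c1 * c2 * ((1 + s1 + s2) * c)" by (simp add: algebra_simps)
  finally show ?thesis using assms(7,8) by simp
qed

theorem slice_density:
  "\<forall>w\<in>lang r. length w = x + y \<and> ones w = x \<Longrightarrow>
    slice_weight x y * real (card (lang r)) \<le> real (rsize r) * real (nslice x y)"
proof (induction r arbitrary: x y)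
  case Eps
  then have "x + y = 0" by simp
  then show ?case by (simp add: slice_weight_def superlin_def)
next
  case (Lit b)
  then have "x + y = 1" "x = (if b then 1 else 0)" by auto
  then show ?case by (auto simp: slice_weight_def superlin_def nslice_def)
next
  case (Union r s)
  have "slice_weight x y * real (card (lang (Union r s)))
      \<le> slice_weight x y * real (card (lang r)) + slice_weight x y * real (card (lang s))"
    using card_Un_le[of "lang r" "lang s"] slice_weight_nonneg[of x y]
    by (simp flip: distrib_left add: mult_left_mono)
  also have "\<dots> \<le> real (rsize r) * real (nslice x y) + real (rsize s) * real (nslice x y)"
    using Union.prems by (intro add_mono Union.IH) auto
  also have "\<dots> \<le> real (rsize (Union r s)) * real (nslice x y)" by (simp add: algebra_simps)
  finally show ?case .
next
  case (Concat r s)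
  obtain o1 z1 o2 z2 where r: "\<forall>u\<in>lang r. length u = o1 + z1 \<and> ones u = o1"
    and s: "\<forall>v\<in>lang s. length v = o2 + z2 \<and> ones v = o2" and xy: "x = o1 + o2" "y = z1 + z2"
    using Concat.prems by (rule lang_Concat_slice)
  show ?case
    unfolding rsize.simps of_nat_add of_nat_1
  proof (rule concat_density_step)
    show "slice_weight o1 z1 * real (card (lang r)) \<le> real (rsize r) * real (nslice o1 z1)"
      using r by (rule Concat.IH(1))
    show "slice_weight o2 z2 * real (card (lang s)) \<le> real (rsize s) * real (nslice o2 z2)"
      using s by (rule Concat.IH(2))
    show "real (card (lang r)) \<le> real (nslice o1 z1)" "real (card (lang s)) \<le> real (nslice o2 z2)"
      using card_le_binomial_if_slice[OF r] card_le_binomial_if_slice[OF s] by (simp_all add: nslice_def)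
    show "real (card (lang (Concat r s))) \<le> real (card (lang r)) * real (card (lang s))"
      using card_lang_Concat_le[of r s] by (simp flip: of_nat_mult)
    show "real (nslice o1 z1) * real (nslice o2 z2) * slice_weight x y
        \<le> real (nslice x y) * (1 + slice_weight o1 z1 + slice_weight o2 z2)"
      using slice_weight_concat_le[of o1 z1 o2 z2] xy by (simp add: nslice_pair_def mult.commute)
  qed (simp_all add: nslice_pos slice_weight_nonneg add.assoc)
qed

(* The common length of the words of r when they all have the same length (rlength_eq);
   for a union only the left operand is consulted. *)
fun rlength :: "'a rexp \<Rightarrow> nat" where
  "rlength Eps = 0"
| "rlength (Lit a) = 1"
| "rlength (Union r s) = rlength r"
| "rlength (Concat r s) = rlength r + rlength s"

lemma rlength_eq: "\<forall>w\<in>lang r. length w = N \<Longrightarrow> rlength r = N"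
proof (induction r arbitrary: N)
  case (Concat r s)
  then obtain Nr Ns where "\<forall>u\<in>lang r. length u = Nr" "\<forall>v\<in>lang s. length v = Ns" "Nr + Ns = N"
    by (elim lang_Concat_measure) auto
  then show ?case using Concat.IH(1)[of Nr] Concat.IH(2)[of Ns] by simp
qed auto

lemma Concat_lengths:
  assumes "\<forall>w\<in>lang (Concat r s). length w = N"
  shows "\<forall>u\<in>lang r. length u = rlength r" "\<forall>v\<in>lang s. length v = rlength s"
    "rlength r + rlength s = N"
proof -
  obtain Nr Ns where "\<forall>u\<in>lang r. length u = Nr" "\<forall>v\<in>lang s. length v = Ns" "Nr + Ns = N"
    using assms by (elim lang_Concat_measure) auto
  then show "\<forall>u\<in>lang r. length u = rlength r" "\<forall>v\<in>lang s. length v = rlength s"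
    "rlength r + rlength s = N"
    using rlength_eq[of r Nr] rlength_eq[of s Ns] by auto
qed

fun lit_positions :: "nat \<Rightarrow> 'a rexp \<Rightarrow> nat list" where
  "lit_positions off Eps = []"
| "lit_positions off (Lit a) = [off]"
| "lit_positions off (Union r s) = lit_positions off r @ lit_positions off s"
| "lit_positions off (Concat r s) = lit_positions off r @ lit_positions (off + rlength r) s"

lemma length_lit_positions_le: "length (lit_positions off r) \<le> rsize r"
  by (induction r arbitrary: off) (auto simp: add_mono le_SucI)

lemma lit_positions_bounds:
  "\<forall>w\<in>lang r. length w = N \<Longrightarrow> p \<in> set (lit_positions off r) \<Longrightarrow> off \<le> p \<and> p < off + N"
proof (induction r arbitrary: N off)
  case (Union r s)
  then show ?case by auto
next
  case (Concat r s)
  note len = Concat_lengths[OF Concat.prems(1)]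
  from Concat.prems(2) consider "p \<in> set (lit_positions off r)" | "p \<in> set (lit_positions (off + rlength r) s)"
    by auto
  then show ?case
  proof cases
    case 1
    then show ?thesis using Concat.IH(1)[OF len(1)] len(3) by fastforce
  next
    case 2
    then show ?thesis using Concat.IH(2)[OF len(2)] len(3) by fastforce
  qed
qed auto

definition lits_in :: "nat set \<Rightarrow> nat \<Rightarrow> 'a rexp \<Rightarrow> nat" where
  "lits_in S off r = length (filter (\<lambda>p. p \<in> S) (lit_positions off r))"

fun restrict_word :: "nat set \<Rightarrow> nat \<Rightarrow> bool list \<Rightarrow> bool list" where
  "restrict_word S off [] = []"
| "restrict_word S off (x # xs) =
    (if off \<in> S then x # restrict_word S (Suc off) xs else restrict_word S (Suc off) xs)"

fun ones_within :: "nat set \<Rightarrow> nat \<Rightarrow> bool list \<Rightarrow> bool" where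
  "ones_within S off [] = True"
| "ones_within S off (x # xs) = ((x \<longrightarrow> off \<in> S) \<and> ones_within S (Suc off) xs)"

lemma restrict_word_append:
  "restrict_word S off (u @ v) = restrict_word S off u @ restrict_word S (off + length u) v"
  by (induction u arbitrary: off) auto

lemma ones_within_append:
  "ones_within S off (u @ v) \<longleftrightarrow> ones_within S off u \<and> ones_within S (off + length u) v"
  by (induction u arbitrary: off) auto

lemma ones_within_iff: "ones_within S off w \<longleftrightarrow> (\<forall>i<length w. w ! i \<longrightarrow> off + i \<in> S)"
  by (induction w arbitrary: off) (auto simp: All_less_Suc2)

lemma length_restrict_word: "length (restrict_word S off w) = card (S \<inter> {off..<off + length w})"
proof (induction w arbitrary: off)
  case (Cons x w)
  have "{off..<off + length (x # w)} = insert off {Suc off..<Suc off + length w}" by auto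
  then have "S \<inter> {off..<off + length (x # w)}
      = (if off \<in> S then insert off (S \<inter> {Suc off..<Suc off + length w}) else S \<inter> {Suc off..<Suc off + length w})"
    by auto
  then show ?case using Cons[of "Suc off"] by simp
qed simp

lemma ones_restrict_word: "ones_within S off w \<Longrightarrow> ones (restrict_word S off w) = ones w"
  by (induction w arbitrary: off) auto

lemma restrict_word_inj:
  "ones_within S off u \<Longrightarrow> ones_within S off v \<Longrightarrow> length u = length v \<Longrightarrow>
    restrict_word S off u = restrict_word S off v \<Longrightarrow> u = v"
proof (induction u arbitrary: v off)
  case (Cons x u)
  then obtain y v' where "v = y # v'" by (cases v) auto
  with Cons show ?case by (auto split: if_splits)
qed simp

definition restrict_lang :: "nat set \<Rightarrow> nat \<Rightarrow> bool rexp \<Rightarrow> bool list set" where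
  "restrict_lang S off r = restrict_word S off ` {w \<in> lang r. ones_within S off w}"

lemma restrict_lang_length:
  "\<forall>w\<in>lang r. length w = N \<Longrightarrow> x \<in> restrict_lang S off r \<Longrightarrow> length x = card (S \<inter> {off..<off + N})"
  by (auto simp: restrict_lang_def length_restrict_word)

lemma restrict_lang_Union: "restrict_lang S off (Union r s) = restrict_lang S off r \<union> restrict_lang S off s"
  by (auto simp: restrict_lang_def)

lemma restrict_lang_Concat:
  assumes "\<forall>u\<in>lang r. length u = rlength r"
  shows "restrict_lang S off (Concat r s)
    = {x @ y | x y. x \<in> restrict_lang S off r \<and> y \<in> restrict_lang S (off + rlength r) s}"
proof (rule set_eqI, rule iffI)
  fix w assume "w \<in> restrict_lang S off (Concat r s)"
  then obtain u v where uv: "u \<in> lang r" "v \<in> lang s" "ones_within S off (u @ v)"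
    "w = restrict_word S off (u @ v)"
    unfolding restrict_lang_def by auto
  have "length u = rlength r" using assms uv(1) by blast
  then have "restrict_word S off u \<in> restrict_lang S off r"
    "restrict_word S (off + rlength r) v \<in> restrict_lang S (off + rlength r) s"
    "w = restrict_word S off u @ restrict_word S (off + rlength r) v"
    using uv by (auto simp: restrict_lang_def ones_within_append restrict_word_append)
  then show "w \<in> {x @ y | x y. x \<in> restrict_lang S off r \<and> y \<in> restrict_lang S (off + rlength r) s}"
    by blast
next
  fix w assume "w \<in> {x @ y | x y. x \<in> restrict_lang S off r \<and> y \<in> restrict_lang S (off + rlength r) s}"
  then obtain u v where uv: "u \<in> lang r" "ones_within S off u" "v \<in> lang s"
    "ones_within S (off + rlength r) v" "w = restrict_word S off u @ restrict_word S (off + rlength r) v"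
    unfolding restrict_lang_def by auto
  have "length u = rlength r" using assms uv(1) by blast
  then have "u @ v \<in> lang (Concat r s)" "ones_within S off (u @ v)" "w = restrict_word S off (u @ v)"
    using uv by (auto simp: ones_within_append restrict_word_append)
  then show "w \<in> restrict_lang S off (Concat r s)"
    unfolding restrict_lang_def by blast
qed

definition expressible_within :: "'a list set \<Rightarrow> nat \<Rightarrow> bool" where
  "expressible_within L m \<longleftrightarrow> L = {} \<or> L = {[]} \<or> (\<exists>e. lang e = L \<and> rsize e + 1 \<le> 2 * m)"

lemma expressible_within_mono:
  "expressible_within L m \<Longrightarrow> m \<le> m' \<Longrightarrow> expressible_within L m'"
  unfolding expressible_within_def by fastforce

lemma expressible_within_Un:
  assumes "expressible_within L1 m1" "expressible_within L2 m2" "\<forall>x\<in>L1 \<union> L2. length x = l"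
  shows "expressible_within (L1 \<union> L2) (m1 + m2)"
proof (cases "l = 0")
  case True
  then have "L1 \<union> L2 \<subseteq> {[]}" using assms(3) by auto
  then show ?thesis by (auto simp: expressible_within_def subset_singleton_iff)
next
  case False
  then have "L1 \<noteq> {[]}" "L2 \<noteq> {[]}" using assms(3) by auto
  then consider "L1 = {}" | "L2 = {}" | e1 e2 where "lang e1 = L1" "rsize e1 + 1 \<le> 2 * m1"
      "lang e2 = L2" "rsize e2 + 1 \<le> 2 * m2"
    using assms(1,2) by (auto simp: expressible_within_def)
  then show ?thesis
  proof cases
    case 1
    then show ?thesis using expressible_within_mono[OF assms(2)] by simp
  next
    case 2
    then show ?thesis using expressible_within_mono[OF assms(1)] by simp
  next
    case 3
    then show ?thesis
      unfolding expressible_within_def by (intro disjI2 exI[of _ "Union e1 e2"]) auto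
  qed
qed

lemma expressible_within_concat:
  assumes "expressible_within L1 m1" "expressible_within L2 m2"
  shows "expressible_within {x @ y | x y. x \<in> L1 \<and> y \<in> L2} (m1 + m2)"
proof -
  consider "L1 = {} \<or> L2 = {}" | "L1 = {[]}" | "L2 = {[]}" | e1 e2 where "lang e1 = L1"
      "rsize e1 + 1 \<le> 2 * m1" "lang e2 = L2" "rsize e2 + 1 \<le> 2 * m2"
    using assms by (auto simp: expressible_within_def)
  then show ?thesis
  proof cases
    case 1
    then show ?thesis by (auto simp: expressible_within_def)
  next
    case 2
    then show ?thesis using expressible_within_mono[OF assms(2)] by simp
  next
    case 3
    then show ?thesis using expressible_within_mono[OF assms(1)] by simp
  next
    case 4
    then show ?thesis
      unfolding expressible_within_def by (intro disjI2 exI[of _ "Concat e1 e2"]) auto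
  qed
qed

theorem restrict_lang_expressible:
  "\<forall>w\<in>lang r. length w = N \<Longrightarrow> expressible_within (restrict_lang S off r) (lits_in S off r)"
proof (induction r arbitrary: N off)
  case Eps
  then show ?case by (auto simp: expressible_within_def restrict_lang_def)
next
  case (Lit x)
  show ?case
  proof (cases "off \<in> S")
    case True
    then have "restrict_lang S off (Lit x) = {[x]}" "lits_in S off (Lit x) = 1"
      by (auto simp: restrict_lang_def lits_in_def)
    then show ?thesis unfolding expressible_within_def by (intro disjI2 exI[of _ "Lit x"]) auto
  next
    case False
    then show ?thesis by (cases x) (auto simp: expressible_within_def restrict_lang_def)
  qed
next
  case (Union r s)
  have "\<forall>w\<in>lang r. length w = N" "\<forall>w\<in>lang s. length w = N" using Union.prems by auto
  then have "expressible_within (restrict_lang S off r \<union> restrict_lang S off s) (lits_in S off r + lits_in S off s)"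
    using Union.IH(1)[of N off] Union.IH(2)[of N off] restrict_lang_length[OF Union.prems, of _ S off]
    by (intro expressible_within_Un[where l = "card (S \<inter> {off..<off + N})"]) (auto simp: restrict_lang_Union)
  then show ?case by (simp add: restrict_lang_Union lits_in_def)
next
  case (Concat r s)
  note len = Concat_lengths[OF Concat.prems]
  show ?case
    unfolding restrict_lang_Concat[OF len(1)] lits_in_def
    using Concat.IH(1)[OF len(1)] Concat.IH(2)[OF len(2)]
    by (auto simp: lits_in_def intro: expressible_within_concat)
qed

lemma card_supersets:
  assumes "finite A" "T \<subseteq> A" "card T \<le> m"
  shows "card {S. S \<subseteq> A \<and> card S = m \<and> T \<subseteq> S} = (card A - card T) choose (m - card T)"
proof -
  have fin: "finite T" using assms finite_subset by blast
  have "bij_betw (\<lambda>U. U \<union> T) {U. U \<subseteq> A - T \<and> card U = m - card T} {S. S \<subseteq> A \<and> card S = m \<and> T \<subseteq> S}"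
  proof (rule bij_betw_byWitness[where f' = "\<lambda>S. S - T"])
    show "(\<lambda>U. U \<union> T) ` {U. U \<subseteq> A - T \<and> card U = m - card T} \<subseteq> {S. S \<subseteq> A \<and> card S = m \<and> T \<subseteq> S}"
    proof clarify
      fix U assume "U \<subseteq> A - T" "card U = m - card T"
      moreover have "finite U" using \<open>U \<subseteq> A - T\<close> assms(1) finite_subset by blast
      moreover have "U \<inter> T = {}" using \<open>U \<subseteq> A - T\<close> by auto
      ultimately have "card (U \<union> T) = m" using assms(3) fin by (simp add: card_Un_disjoint)
      then show "U \<union> T \<subseteq> A \<and> card (U \<union> T) = m \<and> T \<subseteq> U \<union> T"
        using \<open>U \<subseteq> A - T\<close> assms(2) by auto
    qed
    show "(\<lambda>S. S - T) ` {S. S \<subseteq> A \<and> card S = m \<and> T \<subseteq> S} \<subseteq> {U. U \<subseteq> A - T \<and> card U = m - card T}"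
      using fin by (auto simp: card_Diff_subset)
  qed auto
  then have "card {S. S \<subseteq> A \<and> card S = m \<and> T \<subseteq> S} = card {U. U \<subseteq> A - T \<and> card U = m - card T}"
    by (simp add: bij_betw_same_card)
  also have "\<dots> = (card A - card T) choose (m - card T)"
    using assms fin by (simp add: n_subsets card_Diff_subset)
  finally show ?thesis .
qed

lemma sum_length_filter_mem:
  assumes "finite \<S>" "\<forall>p\<in>set ps. card {S\<in>\<S>. p \<in> S} = K"
  shows "(\<Sum>S\<in>\<S>. length (filter (\<lambda>p. p \<in> S) ps)) = length ps * K"
  using assms(2)
proof (induction ps)
  case (Cons p ps)
  have "(\<Sum>S\<in>\<S>. length (filter (\<lambda>p. p \<in> S) (p # ps)))
      = (\<Sum>S\<in>\<S>. (if p \<in> S then 1 else 0) + length (filter (\<lambda>p. p \<in> S) ps))"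
    by (rule sum.cong) auto
  also have "\<dots> = (\<Sum>S\<in>\<S>. if p \<in> S then 1 else 0) + (\<Sum>S\<in>\<S>. length (filter (\<lambda>p. p \<in> S) ps))"
    by (rule sum.distrib)
  also have "(\<Sum>S\<in>\<S>. if p \<in> S then 1 else 0) = card {S\<in>\<S>. p \<in> S}"
    using assms(1) by (simp add: sum.If_cases Int_def conj_commute)
  finally show ?case using Cons by simp
qed simp

lemma ones_eq_card: "ones w = card {i. i < length w \<and> w ! i}"
  unfolding ones_def by (simp add: length_filter_conv_card)

lemma restricted_density:
  assumes "1 \<le> k" "S \<subseteq> {..<n}" "card S = 2 * k" "\<forall>w\<in>lang r. length w = n \<and> ones w = k"
  shows "slice_weight k k * real (card {w \<in> lang r. ones_within S 0 w})
    \<le> real (2 * lits_in S 0 r) * real (nslice k k)"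
proof -
  have len: "\<forall>w\<in>lang r. length w = n" using assms(4) by auto
  have "inj_on (restrict_word S 0) {w \<in> lang r. ones_within S 0 w}"
  proof (rule inj_onI)
    fix u v
    assume "u \<in> {w \<in> lang r. ones_within S 0 w}" "v \<in> {w \<in> lang r. ones_within S 0 w}"
      and "restrict_word S 0 u = restrict_word S 0 v"
    then show "u = v" using assms(4) restrict_word_inj[of S 0 u v] by auto
  qed
  then have card_eq: "card (restrict_lang S 0 r) = card {w \<in> lang r. ones_within S 0 w}"
    unfolding restrict_lang_def by (rule card_image)
  have slice: "\<forall>x\<in>restrict_lang S 0 r. length x = k + k \<and> ones x = k"
  proof
    fix x assume x: "x \<in> restrict_lang S 0 r"
    then have "length x = card (S \<inter> {0..<0 + n})" by (rule restrict_lang_length[OF len])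
    moreover have "S \<inter> {0..<0 + n} = S" using assms(2) by auto
    moreover have "ones x = k"
      using x assms(4) by (auto simp: restrict_lang_def ones_restrict_word)
    ultimately show "length x = k + k \<and> ones x = k" using assms(3) by simp
  qed
  consider "restrict_lang S 0 r = {}" | "restrict_lang S 0 r = {[]}"
    | e where "lang e = restrict_lang S 0 r" "rsize e + 1 \<le> 2 * lits_in S 0 r"
    using restrict_lang_expressible[OF len, of S 0] unfolding expressible_within_def by blast
  then show ?thesis
  proof cases
    case 1
    then show ?thesis using card_eq by simp
  next
    case 2
    then show ?thesis using slice assms(1) by auto
  next
    case 3
    have "slice_weight k k * real (card (lang e)) \<le> real (rsize e) * real (nslice k k)"
      by (rule slice_density) (use slice 3 in auto)
    also have "\<dots> \<le> real (2 * lits_in S 0 r) * real (nslice k k)"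
      using 3 by (intro mult_right_mono) auto
    finally show ?thesis using 3 card_eq by simp
  qed
qed

(* Average restricted_density over all 2k-sets S of positions: the ones of a word of L lie in
   (n - k choose k) of them, and each literal position in (n - 1 choose 2k - 1). *)
lemma double_counting_bound:
  assumes "1 \<le> k" "2 * k \<le> n" "\<forall>w\<in>lang r. length w = n \<and> ones w = k"
  shows "slice_weight k k * real (card (lang r)) * real ((n - k) choose k)
    \<le> 2 * real (nslice k k) * real (rsize r) * real ((n - 1) choose (2 * k - 1))"
proof -
  define \<S> where "\<S> = {S. S \<subseteq> {..<n} \<and> card S = 2 * k}"
  have fin: "finite \<S>" unfolding \<S>_def by (rule finite_subset[of _ "Pow {..<n}"]) auto
  have "card {S\<in>\<S>. ones_within S 0 w} = (n - k) choose k" if w: "w \<in> lang r" for w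
  proof -
    define T where "T = {i. i < length w \<and> w ! i}"
    have "card T = k" "T \<subseteq> {..<n}" using assms(3) w ones_eq_card[of w] by (auto simp: T_def)
    moreover have "{S\<in>\<S>. ones_within S 0 w} = {S. S \<subseteq> {..<n} \<and> card S = 2 * k \<and> T \<subseteq> S}"
      unfolding \<S>_def T_def by (auto simp: ones_within_iff)
    ultimately show ?thesis using assms(1) card_supersets[of "{..<n}" T "2 * k"] by simp
  qed
  then have left: "(\<Sum>S\<in>\<S>. card {w \<in> lang r. ones_within S 0 w}) = ((n - k) choose k) * card (lang r)"
    using fin finite_lang[of r] by (intro sum_multicount) auto
  have "card {S\<in>\<S>. p \<in> S} = (n - 1) choose (2 * k - 1)" if "p \<in> set (lit_positions 0 r)" for p
  proof -
    have "p < n" using that lit_positions_bounds[of r n p 0] assms(3) by auto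
    moreover have "{S\<in>\<S>. p \<in> S} = {S. S \<subseteq> {..<n} \<and> card S = 2 * k \<and> {p} \<subseteq> S}"
      unfolding \<S>_def by auto
    ultimately show ?thesis using assms(1) card_supersets[of "{..<n}" "{p}" "2 * k"] by simp
  qed
  then have right: "(\<Sum>S\<in>\<S>. lits_in S 0 r) = length (lit_positions 0 r) * ((n - 1) choose (2 * k - 1))"
    unfolding lits_in_def using fin by (intro sum_length_filter_mem) auto
  have "(\<Sum>S\<in>\<S>. slice_weight k k * real (card {w \<in> lang r. ones_within S 0 w}))
      \<le> (\<Sum>S\<in>\<S>. real (2 * lits_in S 0 r) * real (nslice k k))"
    using assms by (intro sum_mono restricted_density) (auto simp: \<S>_def)
  moreover have "(\<Sum>S\<in>\<S>. slice_weight k k * real (card {w \<in> lang r. ones_within S 0 w}))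
      = slice_weight k k * real (\<Sum>S\<in>\<S>. card {w \<in> lang r. ones_within S 0 w})"
    by (simp add: sum_distrib_left)
  moreover have "(\<Sum>S\<in>\<S>. real (2 * lits_in S 0 r) * real (nslice k k))
      = 2 * real (nslice k k) * real (\<Sum>S\<in>\<S>. lits_in S 0 r)"
    by (simp add: sum_distrib_left mult.commute mult.left_commute)
  ultimately have "slice_weight k k * real (card (lang r) * ((n - k) choose k))
      \<le> 2 * real (nslice k k) * real (length (lit_positions 0 r) * ((n - 1) choose (2 * k - 1)))"
    unfolding left right by (simp add: mult.commute)
  also have "\<dots> \<le> 2 * real (nslice k k) * real (rsize r * ((n - 1) choose (2 * k - 1)))"
    using length_lit_positions_le[of 0 r] by (intro mult_left_mono) (auto simp del: of_nat_mult)
  finally show ?thesis by (simp add: ac_simps)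
qed

lemma rsize_lower_bound:
  assumes "1 \<le> k" "2 * k \<le> n" "\<forall>w\<in>lang r. length w = n \<and> ones w = k"
  shows "(quasipoly k + 2) * real (card (lang r)) * real n \<le> 4 * real (rsize r) * real (n choose k)"
proof -
  define X where "X = real ((n - k) choose k)"
  define B where "B = real ((n - 1) choose (2 * k - 1))"
  define D where "D = real (n choose (2 * k))"
  have "0 < X" using assms(2) by (simp add: X_def)
  have "2 * k * (n choose (2 * k)) = n * ((n - 1) choose (2 * k - 1))"
    using times_binomial_minus1_eq[of "2 * k" n] assms(1) by simp
  then have id1: "real n * B = 2 * real k * D"
    unfolding B_def D_def by (metis of_nat_mult of_nat_numeral)
  have "(n choose (2 * k)) * nslice k k = (n choose k) * ((n - k) choose k)"
    using choose_mult[of k "2 * k" n] assms(2) by (simp add: nslice_def mult_2)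
  then have id2: "D * real (nslice k k) = real (n choose k) * X"
    unfolding X_def D_def by (metis of_nat_mult)
  have "((quasipoly k + 2) * real (card (lang r)) * real n) * (real k * X)
      = (slice_weight k k * real (card (lang r)) * X) * real n"
    by (simp add: slice_weight_def superlin_def algebra_simps)
  also have "\<dots> \<le> (2 * real (nslice k k) * real (rsize r) * B) * real n"
    using double_counting_bound[OF assms] by (intro mult_right_mono) (simp_all add: X_def B_def)
  also have "\<dots> = 4 * real (rsize r) * real k * (D * real (nslice k k))"
    using id1 by (simp add: ac_simps)
  also have "\<dots> = (4 * real (rsize r) * real (n choose k)) * (real k * X)"
    by (simp add: id2 ac_simps)
  finally show ?thesis
    using \<open>0 < X\<close> assms(1) by (simp add: mult_le_cancel_right_pos)
qed

fun word_rexp :: "'a list \<Rightarrow> 'a rexp" where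
  "word_rexp [] = Eps"
| "word_rexp (a # w) = Concat (Lit a) (word_rexp w)"

lemma lang_word_rexp: "lang (word_rexp w) = {w}"
  by (induction w) auto

lemma finite_lang_has_rexp: "finite L \<Longrightarrow> L \<noteq> {} \<Longrightarrow> \<exists>r. lang r = L"
proof (induction L rule: finite_ne_induct)
  case (singleton w)
  then show ?case using lang_word_rexp by blast
next
  case (insert w L)
  then obtain r where "lang r = L" by blast
  then have "lang (Union (word_rexp w) r) = insert w L" by (simp add: lang_word_rexp)
  then show ?case by blast
qed

lemma rpn_witness:
  assumes "finite L" "L \<noteq> {}"
  obtains r where "lang r = L" "rsize r = rpn L"
proof -
  have "\<exists>m r. lang r = L \<and> rsize r = m" using finite_lang_has_rexp[OF assms] by blast
  then have "\<exists>r. lang r = L \<and> rsize r = (LEAST m. \<exists>r. lang r = L \<and> rsize r = m)"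
    by (rule LeastI_ex)
  then show thesis using that by (auto simp: rpn_def)
qed

lemma rlength_le_rsize: "2 * rlength r \<le> rsize r + 1"
  by (induction r) auto

lemma powr_mult_log: "0 < x \<Longrightarrow> x powr (a * log b x) = exp (a / ln b * (ln x)^2)"
  by (simp add: powr_def log_def power2_eq_square)

lemma rpn_slice_bound:
  assumes "1 \<le> k" "2 * k \<le> n" "L \<noteq> {}" "L \<subseteq> {w. length w = n \<and> ones w = k}"
  shows "real n * exp ((ln k)^2 / 16000) * real (card L) \<le> real (rpn L) * real (n choose k)"
proof -
  define y where "y = exp ((ln k)^2 / 16000)"
  have "finite L"
    using assms(4) finite_lists_length_eq[of "UNIV :: bool set" n] by (auto intro: finite_subset)
  then obtain r where r: "lang r = L" "rsize r = rpn L" using assms(3) by (rule rpn_witness)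
  have slice: "\<forall>w\<in>lang r. length w = n \<and> ones w = k" using assms(4) r(1) by auto
  have card_L: "real (card L) \<le> real (n choose k)"
    using card_le_binomial_if_slice[OF slice] r(1) by simp
  have "1 \<le> y" by (simp add: y_def)
  show ?thesis
  proof (cases "y \<le> 3/2")
    case True
    have "2 * n \<le> rpn L + 1"
      using rlength_le_rsize[of r] rlength_eq[of r n] slice r(2) by auto
    then have "real n * (3/2) \<le> real (rpn L)" using assms(1,2) by linarith
    have "real n * y * real (card L) \<le> real n * (3/2) * real (n choose k)"
      using True card_L \<open>1 \<le> y\<close> by (intro mult_mono) auto
    also have "\<dots> \<le> real (rpn L) * real (n choose k)"
      using \<open>real n * (3/2) \<le> real (rpn L)\<close> by (rule mult_right_mono) simp
    finally show ?thesis unfolding y_def .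
  next
    case False
    have "(3/2::real)^7 \<le> y^7" using False by (intro power_mono) auto
    then have "4 \<le> y^7" by (simp add: power_divide)
    then have "4 * y \<le> y * y^7" using \<open>1 \<le> y\<close> mult_left_mono[of 4 "y^7" y] by (simp add: mult.commute)
    also have "\<dots> = quasipoly k"
      using exp_of_nat_mult[of 8 "(ln k)^2 / 16000"] by (simp add: y_def quasipoly_def power_numeral_reduce)
    finally have "4 * y \<le> quasipoly k + 2" by simp
    then have "(4 * y) * (real (card L) * real n) \<le> (quasipoly k + 2) * (real (card L) * real n)"
      by (rule mult_right_mono) simp
    then have "4 * (real n * y * real (card L)) \<le> (quasipoly k + 2) * real (card (lang r)) * real n"
      using r(1) by (simp add: ac_simps)
    also have "\<dots> \<le> 4 * real (rpn L) * real (n choose k)"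
      using rsize_lower_bound[OF assms(1,2) slice] r(2) by simp
    finally show ?thesis unfolding y_def by simp
  qed
qed

theorem corollary5p3:
  "\<exists>c>0. \<forall>(n::nat) (k::nat) (L::bool list set).
     2 * k \<le> n \<longrightarrow> L \<noteq> {} \<longrightarrow>
     L \<subseteq> {w. length w = n \<and> ones w = k} \<longrightarrow>
     real (rpn L) \<ge> real n * real k powr (c * log 2 (real k)) * real (card L) / real (n choose k)"
proof (intro exI[of _ "ln 2 / 16000"] conjI allI impI)
  fix n k :: nat and L :: "bool list set"
  assume "2 * k \<le> n" "L \<noteq> {}" "L \<subseteq> {w. length w = n \<and> ones w = k}"
  show "real n * real k powr (ln 2 / 16000 * log 2 (real k)) * real (card L) / real (n choose k) \<le> real (rpn L)"
  proof (cases "k = 0")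
    case True
    then show ?thesis by simp \<comment> \<open>the bound is trivial: \<open>0 powr x = 0\<close>\<close>
  next
    case False
    then have "real k powr (ln 2 / 16000 * log 2 (real k)) = exp ((ln k)^2 / 16000)"
      using powr_mult_log[of "real k" "ln 2 / 16000" 2] by simp
    moreover have "0 < real (n choose k)" using \<open>2 * k \<le> n\<close> by simp
    ultimately show ?thesis
      using rpn_slice_bound[of k n L] False \<open>2 * k \<le> n\<close> \<open>L \<noteq> {}\<close> \<open>L \<subseteq> _\<close>
      by (simp add: divide_le_eq)
  qed
qed simp

end
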